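(* Fix $m\geq1$ and $\lambda_1,\dots,\lambda_m\in(0,1)$. Let $U\subseteq\mathbb{C}^m$ be an open neighbourhood of $0$ and $p:U\to\mathbb{R}$ a strictly plurisubharmonic $C^\infty$ function with $p(0)=0$ and $\nabla p(0)=0$. Then there exist $\epsilon>0$ and a strictly plurisubharmonic $C^\infty$ function $q:U\setminus\{0\}\to\mathbb{R}$ which agrees with $p$ outside some neighbourhood of $0$ in $U$ and agrees with $\epsilon r_\lambda^2$ on some smaller punctured neighbourhood of $0$.
   Context: $r_\lambda:\mathbb{C}^m\setminus\{0\}\to(0,\infty)$ is the unique function with $r_\lambda=1$ on the unit sphere $|z_1|^2+\dots+|z_m|^2=1$ and $r_\lambda(e^{\lambda_1s}z_1,\dots,e^{\lambda_ms}z_m)=e^s\,r_\lambda(z_1,\dots,z_m)$ for all $s\in\mathbb{R}$ (each orbit of this flow meets the unit sphere exactly once). It is the radius function of the Kähler cone structure on $\mathbb{C}^m\setminus\{0\}$ obtained by deforming the standard Sasakian structure of $S^{2m-1}$ along the Reeb-type vector field $i\sum_a\lambda_a(z_a\partial_{z_a}-\bar z_a\partial_{\bar z_a})$. A $C^\infty$ function $f$ is strictly plurisubharmonic if $dd^cf(v,Jv)>0$ for all nonzero tangent vectors $v$. *)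

theory Defs
  imports "HOL-Analysis.Analysis"
begin

coinductive smooth_on :: "'a::real_normed_vector set \<Rightarrow> ('a \<Rightarrow> real) \<Rightarrow> bool"
  for U where
  "f differentiable_on U \<Longrightarrow>
   (\<forall>v. smooth_on U (\<lambda>x. frechet_derivative f (at x) v)) \<Longrightarrow> smooth_on U f"

definition hess :: "('a::real_normed_vector \<Rightarrow> real) \<Rightarrow> 'a \<Rightarrow> 'a \<Rightarrow> 'a \<Rightarrow> real" where
  "hess f x v w = frechet_derivative (\<lambda>y. frechet_derivative f (at y) v) (at x) w"

definition Jc :: "complex ^ 'm \<Rightarrow> complex ^ 'm" where
  "Jc v = (\<chi> a. \<i> * v $ a)"

text \<open>Strict plurisubharmonicity: dd^c f (v, J v) > 0 for v nonzero; for real C^2 f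
  one has dd^c f (v, Jv) = D^2 f(v,v) + D^2 f(Jv,Jv) (Levi form up to a positive factor).\<close>
definition strictly_psh_on :: "(complex ^ 'm) set \<Rightarrow> (complex ^ 'm \<Rightarrow> real) \<Rightarrow> bool" where
  "strictly_psh_on U f \<longleftrightarrow>
     (\<forall>x\<in>U. \<forall>v. v \<noteq> 0 \<longrightarrow> hess f x v v + hess f x (Jc v) (Jc v) > 0)"

definition lflow :: "('m \<Rightarrow> real) \<Rightarrow> real \<Rightarrow> complex ^ 'm \<Rightarrow> complex ^ 'm" where
  "lflow lam s z = (\<chi> a. complex_of_real (exp (lam a * s)) * z $ a)"

definition r_lambda :: "('m \<Rightarrow> real) \<Rightarrow> complex ^ 'm \<Rightarrow> real" where
  "r_lambda lam = (THE r. r 0 = 0 \<and> (\<forall>z. z \<noteq> 0 \<longrightarrow> r z > 0) \<and>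
       (\<forall>z. norm z = 1 \<longrightarrow> r z = 1) \<and>
       (\<forall>s z. z \<noteq> 0 \<longrightarrow> r (lflow lam s z) = exp s * r z))"

end

theory Submission
  imports Defs "HOL-Real_Asymp.Real_Asymp"
begin

(* Cut off ln |z|^2 by a bump chi that is 1 near 0 and set
   phi = p + 2 e^2 s chi ln (|z|^2 / s^2).  For small s this is strictly plurisubharmonic on
   U - {0}: the Levi form of p is uniformly positive on a compact ball, ln |z|^2 is
   plurisubharmonic where chi = 1, and the negative contributions of chi are O(s ln s).
   As p(0) = 0 and dp(0) = 0, phi >= 3 e^2 s on the annulus e s < |z| <= e^2 s and
   phi <= -2 e^2 s on |z| < s / e, while eps r_lambda^2 with eps = e^2 s / 2 stays in [0, eps]
   there.  A regularised maximum of phi and eps r_lambda^2 is therefore phi on the annulus and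
   eps r_lambda^2 inside, and continues as phi outside.  Strict plurisubharmonicity of r_lambda^2
   comes from implicit differentiation of sum_a exp (-2 lambda_a t) |z_a|^2 = 1, which defines
   t = ln r_lambda. *)

section \<open>Smooth functions\<close>

lemma frechet_derivative_eq_on_open:
  assumes "open V" "x \<in> V" "\<And>y. y \<in> V \<Longrightarrow> f y = g y"
  shows "frechet_derivative f (at x) = frechet_derivative g (at x)"
proof -
  have "(f has_derivative D) (at x) \<longleftrightarrow> (g has_derivative D) (at x)" for D
    using has_derivative_transform_within_open[of f D x UNIV V g]
      has_derivative_transform_within_open[of g D x UNIV V f] assms
    by metis
  then show ?thesis unfolding frechet_derivative_def by simp
qed

lemma hess_eq_on_open:
  assumes "open V" "x \<in> V" "\<And>y. y \<in> V \<Longrightarrow> f y = g y"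
  shows "hess f x = hess g x"
proof (intro ext)
  fix v w
  have "frechet_derivative f (at y) = frechet_derivative g (at y)" if "y \<in> V" for y
    using frechet_derivative_eq_on_open[OF assms(1) that assms(3)] .
  then have "frechet_derivative (\<lambda>y. frechet_derivative f (at y) v) (at x) =
             frechet_derivative (\<lambda>y. frechet_derivative g (at y) v) (at x)"
    by (intro frechet_derivative_eq_on_open[OF assms(1,2)]) simp
  then show "hess f x v w = hess g x v w" by (simp add: hess_def)
qed

lemma smooth_on_differentiable_on: "smooth_on U f \<Longrightarrow> f differentiable_on U"
  by (erule smooth_on.cases) auto

lemma smooth_on_frechet_derivative:
  "smooth_on U f \<Longrightarrow> smooth_on U (\<lambda>x. frechet_derivative f (at x) v)"
  by (erule smooth_on.cases) auto

lemma smooth_on_differentiable_at: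
  "smooth_on U f \<Longrightarrow> open U \<Longrightarrow> x \<in> U \<Longrightarrow> f differentiable (at x)"
  using smooth_on_differentiable_on differentiable_on_eq_differentiable_at by blast

lemma smooth_on_has_derivative:
  "smooth_on U f \<Longrightarrow> open U \<Longrightarrow> x \<in> U \<Longrightarrow> (f has_derivative frechet_derivative f (at x)) (at x)"
  using smooth_on_differentiable_at frechet_derivative_works by blast

lemma smooth_on_imp_continuous_on: "smooth_on U f \<Longrightarrow> continuous_on U f"
  using smooth_on_differentiable_on differentiable_imp_continuous_on by blast

lemma smooth_on_hess_has_derivative:
  assumes "smooth_on V f" "open V" "x \<in> V"
  shows "((\<lambda>y. frechet_derivative f (at y) v) has_derivative hess f x v) (at x)"
proof -
  have "hess f x v = frechet_derivative (\<lambda>y. frechet_derivative f (at y) v) (at x)"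
    by (simp add: hess_def fun_eq_iff)
  then show ?thesis
    using smooth_on_has_derivative[OF smooth_on_frechet_derivative[OF assms(1)] assms(2,3)] by simp
qed

lemma smooth_on_coinduct_on:
  assumes "open U" "P f"
    and step: "\<And>g. P g \<Longrightarrow> g differentiable_on U \<and>
        (\<forall>v. \<exists>h. P h \<and> (\<forall>x\<in>U. frechet_derivative g (at x) v = h x))"
  shows "smooth_on U f"
proof -
  let ?X = "\<lambda>g. \<exists>h. P h \<and> (\<forall>x\<in>U. g x = h x)"
  have "?X f" using assms(2) by blast
  then show ?thesis
  proof (coinduction arbitrary: f rule: smooth_on.coinduct)
    case (smooth_on g)
    then obtain h where h: "P h" "\<forall>x\<in>U. g x = h x" by blast
    have "h differentiable_on U" using step[OF h(1)] by blast
    have "g differentiable at x" if x: "x \<in> U" for x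
    proof -
      obtain D where "(h has_derivative D) (at x)"
        using \<open>h differentiable_on U\<close> assms(1) x
        by (auto simp: differentiable_on_eq_differentiable_at differentiable_def)
      then have "(g has_derivative D) (at x)"
        by (rule has_derivative_transform_within_open[OF _ assms(1) x]) (use h(2) in auto)
      then show ?thesis by (auto simp: differentiable_def)
    qed
    then have "g differentiable_on U"
      using assms(1) differentiable_on_eq_differentiable_at by blast
    moreover have "frechet_derivative g (at x) = frechet_derivative h (at x)" if "x \<in> U" for x
      using frechet_derivative_eq_on_open[OF assms(1) that] h(2) by blast
    then have "\<forall>v. ?X (\<lambda>x. frechet_derivative g (at x) v)"
      using step[OF h(1)] by fastforce
    ultimately show ?case by blast
  qed
qed

lemma smooth_on_subset: "smooth_on U f \<Longrightarrow> V \<subseteq> U \<Longrightarrow> smooth_on V f"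
proof (coinduction arbitrary: f rule: smooth_on.coinduct)
  case (smooth_on f)
  then show ?case
    using smooth_on_differentiable_on smooth_on_frechet_derivative differentiable_on_subset by blast
qed

lemma smooth_on_local:
  assumes U: "open U"
    and loc: "\<And>x. x \<in> U \<Longrightarrow> \<exists>V g. open V \<and> x \<in> V \<and> smooth_on V g \<and> (\<forall>y\<in>V. f y = g y)"
  shows "smooth_on U f"
proof (rule smooth_on_coinduct_on[OF U, where P="\<lambda>h. \<forall>x\<in>U. \<exists>V g. open V \<and> x \<in> V \<and>
                                                    smooth_on V g \<and> (\<forall>y\<in>V. h y = g y)"])
  show "\<forall>x\<in>U. \<exists>V g. open V \<and> x \<in> V \<and> smooth_on V g \<and> (\<forall>y\<in>V. f y = g y)" using loc by blast
next
  fix h assume P: "\<forall>x\<in>U. \<exists>V g. open V \<and> x \<in> V \<and> smooth_on V g \<and> (\<forall>y\<in>V. h y = g y)"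
  have "h differentiable at x" if x: "x \<in> U" for x
  proof -
    obtain V g where V: "open V" "x \<in> V" "smooth_on V g" "\<forall>y\<in>V. h y = g y" using P x by blast
    have "(g has_derivative frechet_derivative g (at x)) (at x)"
      using smooth_on_has_derivative V by blast
    then have "(h has_derivative frechet_derivative g (at x)) (at x)"
      by (rule has_derivative_transform_within_open[OF _ V(1,2)]) (use V(4) in auto)
    then show ?thesis by (auto simp: differentiable_def)
  qed
  then have "h differentiable_on U" using U by (simp add: differentiable_on_eq_differentiable_at)
  moreover have "\<forall>x\<in>U. \<exists>V g. open V \<and> x \<in> V \<and> smooth_on V g \<and>
                   (\<forall>y\<in>V. frechet_derivative h (at y) v = g y)" for v
  proof
    fix x assume x: "x \<in> U"
    obtain V g where V: "open V" "x \<in> V" "smooth_on V g" "\<forall>y\<in>V. h y = g y" using P x by blast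
    have "\<forall>y\<in>V. frechet_derivative h (at y) v = frechet_derivative g (at y) v"
      using frechet_derivative_eq_on_open[OF V(1), of _ h g] V(4) by auto
    then show "\<exists>V g. open V \<and> x \<in> V \<and> smooth_on V g \<and> (\<forall>y\<in>V. frechet_derivative h (at y) v = g y)"
      using V smooth_on_frechet_derivative[OF V(3)] by blast
  qed
  ultimately show "h differentiable_on U \<and> (\<forall>v. \<exists>h'. (\<forall>x\<in>U. \<exists>V g. open V \<and> x \<in> V \<and>
      smooth_on V g \<and> (\<forall>y\<in>V. h' y = g y)) \<and> (\<forall>x\<in>U. frechet_derivative h (at x) v = h' x))"
    by (intro conjI allI exI[where x="\<lambda>y. frechet_derivative h (at y) _"]) auto
qed

lemma smooth_on_cong: "open U \<Longrightarrow> smooth_on U g \<Longrightarrow> (\<And>x. x \<in> U \<Longrightarrow> f x = g x) \<Longrightarrow> smooth_on U f"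
  by (rule smooth_on_local) blast+

inductive_set poly_closure :: "('a \<Rightarrow> real) set \<Rightarrow> ('a \<Rightarrow> real) set" for B where
  const: "(\<lambda>x. c) \<in> poly_closure B"
| base: "b \<in> B \<Longrightarrow> b \<in> poly_closure B"
| add: "f \<in> poly_closure B \<Longrightarrow> g \<in> poly_closure B \<Longrightarrow> (\<lambda>x. f x + g x) \<in> poly_closure B"
| mult: "f \<in> poly_closure B \<Longrightarrow> g \<in> poly_closure B \<Longrightarrow> (\<lambda>x. f x * g x) \<in> poly_closure B"

lemma poly_closure_mono:
  assumes "B \<subseteq> B'" "f \<in> poly_closure B" shows "f \<in> poly_closure B'"
  using assms(2) by (induction f rule: poly_closure.induct) (use assms(1) in \<open>auto intro: poly_closure.intros\<close>)

lemma poly_closure_cmult: "f \<in> poly_closure B \<Longrightarrow> (\<lambda>x. c * f x) \<in> poly_closure B"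
  using poly_closure.mult[OF poly_closure.const] by blast

lemma poly_closure_sum:
  "finite A \<Longrightarrow> (\<And>a. a \<in> A \<Longrightarrow> f a \<in> poly_closure B) \<Longrightarrow> (\<lambda>x. \<Sum>a\<in>A. f a x) \<in> poly_closure B"
proof (induction A rule: finite_induct)
  case empty then show ?case using poly_closure.const by simp
next
  case (insert a A) then show ?case using poly_closure.add[of "f a" B] by simp
qed

definition derivatives_in :: "'a::real_normed_vector set \<Rightarrow> ('a \<Rightarrow> real) set \<Rightarrow> ('a \<Rightarrow> real) \<Rightarrow> bool"
  where "derivatives_in U B b \<longleftrightarrow> b differentiable_on U \<and>
           (\<forall>v. \<exists>g\<in>poly_closure B. \<forall>x\<in>U. frechet_derivative b (at x) v = g x)"

text \<open>Smoothness of concrete functions is proved by exhibiting a family \<open>B\<close> all of whose members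
  satisfy \<^const>\<open>derivatives_in\<close>; then all of \<^term>\<open>poly_closure B\<close> is smooth.\<close>

lemma derivatives_inI:
  assumes "\<And>x. x \<in> U \<Longrightarrow> (b has_derivative b' x) (at x)"
    and "\<And>v. (\<lambda>x. b' x v) \<in> poly_closure B"
  shows "derivatives_in U B b"
  unfolding derivatives_in_def
proof (intro conjI allI)
  show "b differentiable_on U"
    using assms(1) by (auto simp: differentiable_on_def differentiable_def intro: has_derivative_at_withinI)
  fix v
  have "\<forall>x\<in>U. frechet_derivative b (at x) v = b' x v"
    using assms(1) frechet_derivative_at by metis
  then show "\<exists>g\<in>poly_closure B. \<forall>x\<in>U. frechet_derivative b (at x) v = g x"
    using assms(2) by (intro bexI[of _ "\<lambda>x. b' x v"])
qed

lemma derivatives_inD: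
  assumes "open U" "derivatives_in U B f"
  obtains f' where "\<And>v. f' v \<in> poly_closure B" "\<And>x. x \<in> U \<Longrightarrow> (f has_derivative (\<lambda>v. f' v x)) (at x)"
proof -
  obtain f' where f': "\<And>v. f' v \<in> poly_closure B" "\<And>v x. x \<in> U \<Longrightarrow> frechet_derivative f (at x) v = f' v x"
    using assms(2) unfolding derivatives_in_def by metis
  have "(f has_derivative (\<lambda>v. f' v x)) (at x)" if "x \<in> U" for x
  proof -
    have "(f has_derivative frechet_derivative f (at x)) (at x)"
      using assms that by (auto simp: derivatives_in_def differentiable_on_eq_differentiable_at
          frechet_derivative_works)
    moreover have "frechet_derivative f (at x) = (\<lambda>v. f' v x)" using f'(2) that by auto
    ultimately show ?thesis by simp
  qed
  then show thesis using that f'(1) by blast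
qed

lemma derivatives_in_smooth:
  "smooth_on U b \<Longrightarrow> {g. smooth_on U g} \<subseteq> B \<Longrightarrow> derivatives_in U B b"
  using smooth_on_differentiable_on smooth_on_frechet_derivative
  by (fastforce simp: derivatives_in_def intro: poly_closure.base)

lemma derivatives_in_poly_closure:
  fixes B :: "('a::real_normed_vector \<Rightarrow> real) set"
  assumes U: "open U" and sub: "B' \<subseteq> B" and B': "\<And>b. b \<in> B' \<Longrightarrow> derivatives_in U B b"
    and f: "f \<in> poly_closure B'"
  shows "derivatives_in U B f"
  using f
proof (induction f rule: poly_closure.induct)
  case (const c)
  show ?case by (rule derivatives_inI[of _ _ "\<lambda>x v. 0"]) (auto intro: poly_closure.const)
next
  case (base b)
  then show ?case using B' by blast
next
  case (add f g)
  obtain f' g' where f': "\<And>v. f' v \<in> poly_closure B" "\<And>x. x \<in> U \<Longrightarrow> (f has_derivative (\<lambda>v. f' v x)) (at x)"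
    and g': "\<And>v. g' v \<in> poly_closure B" "\<And>x. x \<in> U \<Longrightarrow> (g has_derivative (\<lambda>v. g' v x)) (at x)"
    using derivatives_inD[OF U add.IH(1)] derivatives_inD[OF U add.IH(2)] by metis
  show ?case
  proof (rule derivatives_inI[of _ _ "\<lambda>x v. f' v x + g' v x"])
    show "((\<lambda>x. f x + g x) has_derivative (\<lambda>v. f' v x + g' v x)) (at x)" if "x \<in> U" for x
      using has_derivative_add[OF f'(2)[OF that] g'(2)[OF that]] .
    show "(\<lambda>x. f' v x + g' v x) \<in> poly_closure B" for v
      using poly_closure.add[OF f'(1) g'(1)] .
  qed
next
  case (mult f g)
  obtain f' g' where f': "\<And>v. f' v \<in> poly_closure B" "\<And>x. x \<in> U \<Longrightarrow> (f has_derivative (\<lambda>v. f' v x)) (at x)"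
    and g': "\<And>v. g' v \<in> poly_closure B" "\<And>x. x \<in> U \<Longrightarrow> (g has_derivative (\<lambda>v. g' v x)) (at x)"
    using derivatives_inD[OF U mult.IH(1)] derivatives_inD[OF U mult.IH(2)] by metis
  have fg: "f \<in> poly_closure B" "g \<in> poly_closure B"
    using mult.hyps poly_closure_mono[OF sub] by auto
  show ?case
  proof (rule derivatives_inI[of _ _ "\<lambda>x v. f x * g' v x + f' v x * g x"])
    show "((\<lambda>x. f x * g x) has_derivative (\<lambda>v. f x * g' v x + f' v x * g x)) (at x)" if "x \<in> U" for x
      using has_derivative_mult[OF f'(2)[OF that] g'(2)[OF that]] .
    show "(\<lambda>x. f x * g' v x + f' v x * g x) \<in> poly_closure B" for v
      by (intro poly_closure.add poly_closure.mult fg f'(1) g'(1))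
  qed
qed

lemma smooth_on_poly_closure:
  fixes B :: "('a::real_normed_vector \<Rightarrow> real) set"
  assumes "open U" "\<And>b. b \<in> B \<Longrightarrow> derivatives_in U B b" "f \<in> poly_closure B"
  shows "smooth_on U f"
proof (rule smooth_on_coinduct_on[where P="\<lambda>g. g \<in> poly_closure B", OF assms(1,3)])
  fix g assume "g \<in> poly_closure B"
  then have "derivatives_in U B g"
    using derivatives_in_poly_closure[OF assms(1) _ assms(2)] by blast
  then show "g differentiable_on U \<and>
      (\<forall>v. \<exists>h. h \<in> poly_closure B \<and> (\<forall>x\<in>U. frechet_derivative g (at x) v = h x))"
    unfolding derivatives_in_def by blast
qed

lemma derivatives_in_exp:
  assumes "open U" "derivatives_in U B f" "(\<lambda>x. exp (f x)) \<in> B"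
  shows "derivatives_in U B (\<lambda>x. exp (f x))"
proof -
  obtain f' where f': "\<And>v. f' v \<in> poly_closure B" "\<And>x. x \<in> U \<Longrightarrow> (f has_derivative (\<lambda>v. f' v x)) (at x)"
    using derivatives_inD[OF assms(1,2)] by blast
  show ?thesis
  proof (rule derivatives_inI)
    show "((\<lambda>x. exp (f x)) has_derivative (\<lambda>v. exp (f x) * f' v x)) (at x)" if "x \<in> U" for x
      using f'(2)[OF that] by (auto intro!: derivative_eq_intros)
    show "(\<lambda>x. exp (f x) * f' v x) \<in> poly_closure B" for v
      by (intro poly_closure.mult f'(1) poly_closure.base assms(3))
  qed
qed

lemma derivatives_in_inverse:
  assumes "open U" "derivatives_in U B f" "\<And>x. x \<in> U \<Longrightarrow> f x \<noteq> 0" "(\<lambda>x. inverse (f x)) \<in> B"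
  shows "derivatives_in U B (\<lambda>x. inverse (f x))"
proof -
  obtain f' where f': "\<And>v. f' v \<in> poly_closure B" "\<And>x. x \<in> U \<Longrightarrow> (f has_derivative (\<lambda>v. f' v x)) (at x)"
    using derivatives_inD[OF assms(1,2)] by blast
  show ?thesis
  proof (rule derivatives_inI)
    show "((\<lambda>x. inverse (f x)) has_derivative
        (\<lambda>v. - 1 * (inverse (f x) * inverse (f x)) * f' v x)) (at x)" if "x \<in> U" for x
      using Deriv.has_derivative_inverse[OF assms(3)[OF that] f'(2)[OF that]]
      by (rule has_derivative_eq_rhs) (simp add: fun_eq_iff)
    show "(\<lambda>x. - 1 * (inverse (f x) * inverse (f x)) * f' v x) \<in> poly_closure B" for v
      by (intro poly_closure.mult poly_closure.const f'(1) poly_closure.base assms(4))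
  qed
qed

lemma smooth_on_poly_closure_of_smooth:
  fixes B :: "('a::real_normed_vector \<Rightarrow> real) set"
  assumes "open U" "\<And>b. b \<in> B \<Longrightarrow> smooth_on U b" "f \<in> poly_closure B"
  shows "smooth_on U f"
proof (rule smooth_on_poly_closure[OF assms(1), of "{g. smooth_on U g}"])
  show "f \<in> poly_closure {g. smooth_on U g}"
    using poly_closure_mono[OF _ assms(3)] assms(2) by blast
qed (simp add: derivatives_in_smooth)

lemma smooth_on_const: "open U \<Longrightarrow> smooth_on U (\<lambda>x. c)"
  by (rule smooth_on_poly_closure_of_smooth[of U "{}"]) (simp_all add: poly_closure.const)

lemma smooth_on_add:
  "open U \<Longrightarrow> smooth_on U f \<Longrightarrow> smooth_on U g \<Longrightarrow> smooth_on U (\<lambda>x. f x + g x)"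
  by (rule smooth_on_poly_closure_of_smooth[of U "{f, g}"])
     (auto intro!: poly_closure.add[OF poly_closure.base poly_closure.base])

lemma smooth_on_mult:
  "open U \<Longrightarrow> smooth_on U f \<Longrightarrow> smooth_on U g \<Longrightarrow> smooth_on U (\<lambda>x. f x * g x)"
  by (rule smooth_on_poly_closure_of_smooth[of U "{f, g}"])
     (auto intro!: poly_closure.mult[OF poly_closure.base poly_closure.base])

lemma smooth_on_cmult: "open U \<Longrightarrow> smooth_on U f \<Longrightarrow> smooth_on U (\<lambda>x. c * f x)"
  by (rule smooth_on_poly_closure_of_smooth[of U "{f}"])
     (auto intro!: poly_closure_cmult[OF poly_closure.base])

lemma smooth_on_sum:
  "open U \<Longrightarrow> finite A \<Longrightarrow> (\<And>a. a \<in> A \<Longrightarrow> smooth_on U (f a)) \<Longrightarrow> smooth_on U (\<lambda>x. \<Sum>a\<in>A. f a x)"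
  by (rule smooth_on_poly_closure_of_smooth[of U "f ` A"])
     (auto intro!: poly_closure_sum[OF _ poly_closure.base])

lemma smooth_on_bounded_linear:
  fixes L :: "'a::real_normed_vector \<Rightarrow> real"
  assumes "bounded_linear L" "open U"
  shows "smooth_on U L"
proof (rule smooth_on_poly_closure[of U "{L}"])
  fix b assume "b \<in> {L}"
  moreover have "derivatives_in U {L} L"
    by (rule derivatives_inI[of _ L "\<lambda>x. L"])
       (simp_all add: bounded_linear_imp_has_derivative[OF assms(1)] poly_closure.const)
  ultimately show "derivatives_in U {L} b" by simp
qed (simp_all add: assms(2) poly_closure.base)

lemma smooth_on_compose:
  fixes k :: "real \<Rightarrow> real" and f :: "'a::real_normed_vector \<Rightarrow> real"
  assumes I: "open I" and U: "open U" and k: "smooth_on I k" and f: "smooth_on U f"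
    and fU: "\<And>x. x \<in> U \<Longrightarrow> f x \<in> I"
  shows "smooth_on U (\<lambda>x. k (f x))"
proof -
  define B where "B = {g. smooth_on U g} \<union> {h. \<exists>k'. smooth_on I k' \<and> h = (\<lambda>x. k' (f x))}"
  have comp: "derivatives_in U B (\<lambda>x. k' (f x))" if k': "smooth_on I k'" for k'
  proof (rule derivatives_inI)
    fix x assume x: "x \<in> U"
    define d where "d = frechet_derivative k' (at (f x)) 1"
    have "((k' \<circ> f) has_derivative (frechet_derivative k' (at (f x)) \<circ> frechet_derivative f (at x))) (at x)"
      by (rule diff_chain_at[OF smooth_on_has_derivative[OF f U x] smooth_on_has_derivative[OF k' I fU[OF x]]])
    moreover have "frechet_derivative k' (at (f x)) t = t * d" for t
      using linear_scale[OF linear_frechet_derivative[OF smooth_on_differentiable_at[OF k' I fU[OF x]]],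
          of t 1] unfolding d_def by simp
    ultimately show "((\<lambda>x. k' (f x)) has_derivative
        (\<lambda>v. frechet_derivative f (at x) v * frechet_derivative k' (at (f x)) 1)) (at x)"
      by (simp add: o_def d_def[symmetric])
  next
    fix v
    have "(\<lambda>x. frechet_derivative f (at x) v) \<in> B"
      by (simp add: B_def smooth_on_frechet_derivative[OF f])
    moreover have "(\<lambda>x. frechet_derivative k' (at (f x)) 1) \<in> B"
      unfolding B_def
      by (intro UnI2 CollectI exI[of _ "\<lambda>y. frechet_derivative k' (at y) 1"] conjI refl
          smooth_on_frechet_derivative[OF k'])
    ultimately show "(\<lambda>x. frechet_derivative f (at x) v * frechet_derivative k' (at (f x)) 1) \<in> poly_closure B"
      by (intro poly_closure.mult poly_closure.base)
  qed
  have "derivatives_in U B b" if "b \<in> B" for b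
  proof (cases "smooth_on U b")
    case True
    then show ?thesis by (rule derivatives_in_smooth) (unfold B_def, rule Un_upper1)
  next
    case False
    with that have "\<exists>k'. smooth_on I k' \<and> b = (\<lambda>x. k' (f x))" by (simp add: B_def)
    then obtain k' where "smooth_on I k' \<and> b = (\<lambda>x. k' (f x))" ..
    then show ?thesis using comp by simp
  qed
  moreover have "(\<lambda>x. k (f x)) \<in> poly_closure B"
    unfolding B_def by (intro poly_closure.base UnI2 CollectI exI[of _ k] conjI k refl)
  ultimately show ?thesis by (rule smooth_on_poly_closure[OF U])
qed

lemma smooth_on_real_deriv_closed:
  fixes B :: "(real \<Rightarrow> real) set"
  assumes I: "open I"
    and B: "\<And>b. b \<in> B \<Longrightarrow> \<exists>b'\<in>poly_closure B. \<forall>x\<in>I. (b has_real_derivative b' x) (at x)"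
    and f: "f \<in> B"
  shows "smooth_on I f"
proof (rule smooth_on_poly_closure[OF I])
  fix b assume "b \<in> B"
  then obtain b' where "b' \<in> poly_closure B" "\<forall>x\<in>I. (b has_real_derivative b' x) (at x)"
    using B by blast
  then show "derivatives_in I B b"
    by (intro derivatives_inI[of I b "\<lambda>x v. b' x * v"] poly_closure.mult poly_closure.const)
       (auto simp: has_field_derivative_def)
qed (use f in \<open>rule poly_closure.base\<close>)

lemma smooth_on_real_of_smooth_deriv:
  fixes f f' :: "real \<Rightarrow> real"
  assumes I: "open I" and f: "\<And>x. x \<in> I \<Longrightarrow> (f has_real_derivative f' x) (at x)"
    and f': "smooth_on I f'"
  shows "smooth_on I f"
proof (rule smooth_on.intros)
  show "f differentiable_on I"
    using f by (auto simp: differentiable_on_def real_differentiable_def intro: has_field_derivative_at_within)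
  show "\<forall>v. smooth_on I (\<lambda>x. frechet_derivative f (at x) v)"
  proof
    fix v
    have "frechet_derivative f (at x) v = f' x * v" if "x \<in> I" for x
      using frechet_derivative_at[OF f[OF that, unfolded has_field_derivative_def]] by simp
    then show "smooth_on I (\<lambda>x. frechet_derivative f (at x) v)"
      by (rule smooth_on_cong[OF I smooth_on_mult[OF I f' smooth_on_const[OF I]]])
  qed
qed

lemma smooth_on_exp: "smooth_on UNIV (exp :: real \<Rightarrow> real)"
proof (rule smooth_on_real_deriv_closed[of UNIV "{exp}"])
  fix b :: "real \<Rightarrow> real" assume "b \<in> {exp}"
  then show "\<exists>b'\<in>poly_closure {exp}. \<forall>x\<in>UNIV. (b has_real_derivative b' x) (at x)"
    by (intro bexI[of _ exp] poly_closure.base) (simp_all add: DERIV_exp)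
qed simp_all

lemma smooth_on_ln_inverse:
  "smooth_on {0<..} (ln :: real \<Rightarrow> real)" "smooth_on {0<..} (inverse :: real \<Rightarrow> real)"
proof -
  let ?B = "{ln, inverse :: real \<Rightarrow> real}"
  have ln: "\<forall>x\<in>{0<..}. (ln has_real_derivative inverse x) (at x)"
    using DERIV_ln by auto
  have inverse: "\<forall>x\<in>{0<..}. (inverse has_real_derivative - 1 * (inverse x * inverse x)) (at x)"
  proof
    fix x :: real assume "x \<in> {0<..}"
    then show "(inverse has_real_derivative - 1 * (inverse x * inverse x)) (at x)"
      using DERIV_inverse[of x UNIV] by simp
  qed
  have "\<exists>b'\<in>poly_closure ?B. \<forall>x\<in>{0<..}. (b has_real_derivative b' x) (at x)" if "b \<in> ?B" for b
  proof -
    from that consider "b = ln" | "b = inverse" by blast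
    then show ?thesis
    proof cases
      case 1
      then show ?thesis using ln by (intro bexI[of _ inverse] poly_closure.base) simp_all
    next
      case 2
      have "(\<lambda>x. - 1 * (inverse x * inverse x)) \<in> poly_closure ?B"
        by (intro poly_closure.mult poly_closure.const poly_closure.base) simp_all
      with 2 show ?thesis
        using inverse by (intro bexI[of _ "\<lambda>x. - 1 * (inverse x * inverse x)"]) simp_all
    qed
  qed
  then show "smooth_on {0<..} (ln :: real \<Rightarrow> real)" "smooth_on {0<..} (inverse :: real \<Rightarrow> real)"
    by (auto intro: smooth_on_real_deriv_closed[of _ ?B])
qed

lemma smooth_on_ln_comp:
  "open U \<Longrightarrow> smooth_on U f \<Longrightarrow> (\<And>x. x \<in> U \<Longrightarrow> f x > 0) \<Longrightarrow> smooth_on U (\<lambda>x. ln (f x))"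
  by (rule smooth_on_compose[OF _ _ smooth_on_ln_inverse(1)]) auto

lemma smooth_on_inverse_comp:
  "open U \<Longrightarrow> smooth_on U f \<Longrightarrow> (\<And>x. x \<in> U \<Longrightarrow> f x > 0) \<Longrightarrow> smooth_on U (\<lambda>x. inverse (f x))"
  by (rule smooth_on_compose[OF _ _ smooth_on_ln_inverse(2)]) auto

lemma smooth_on_affine: "smooth_on UNIV (\<lambda>x::real. a * x + b)"
  by (intro smooth_on_add smooth_on_cmult smooth_on_const smooth_on_bounded_linear bounded_linear_ident)
     simp_all

lemma smooth_on_deriv:
  fixes g :: "real \<Rightarrow> real"
  assumes "smooth_on UNIV g" shows "smooth_on UNIV (deriv g)"
proof -
  have "frechet_derivative g (at y) 1 = deriv g y" for y
  proof -
    have "(g has_derivative (\<lambda>t. deriv g y * t)) (at y)"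
      using smooth_on_differentiable_at[OF assms, of y]
      by (simp add: DERIV_deriv_iff_real_differentiable[symmetric] has_field_derivative_def)
    from fun_cong[OF frechet_derivative_at[OF this], of 1] show ?thesis by simp
  qed
  then show ?thesis using smooth_on_frechet_derivative[OF assms, of 1] by simp
qed

section \<open>A smooth convex ramp\<close>

lemma power_div_fact_le_exp: "0 \<le> x \<Longrightarrow> x ^ n / fact n \<le> exp (x::real)"
proof -
  assume x: "0 \<le> x"
  have "(\<Sum>i\<in>{n}. x ^ i / fact i) \<le> (\<Sum>i. x ^ i / fact i)"
    by (rule sum_le_suminf) (use summable_exp[of x] x in \<open>auto simp: divide_inverse mult.commute\<close>)
  also have "\<dots> = exp x"
    using sums_unique[OF exp_converges[of x]] by (simp add: divide_inverse mult.commute)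
  finally show ?thesis by simp
qed

lemma mono_imp_deriv_nonneg:
  fixes f :: "real \<Rightarrow> real"
  assumes "mono f" "f differentiable at x" shows "0 \<le> deriv f x"
proof -
  have "(f has_real_derivative deriv f x) (at x)"
    using assms(2) DERIV_deriv_iff_real_differentiable by blast
  then have "((\<lambda>y. (f y - f x) / (y - x)) \<longlongrightarrow> deriv f x) (at x)"
    by (simp add: has_field_derivative_iff)
  moreover have "0 \<le> (f y - f x) / (y - x)" for y
    using monoD[OF assms(1), of x y] monoD[OF assms(1), of y x]
    by (cases "x \<le> y") (auto simp: divide_nonpos_neg)
  ultimately show ?thesis by (intro tendsto_lowerbound) auto
qed

text \<open>\<open>flat_exp 0\<close> is the classical smooth function that vanishes on \<open>t \<le> 0\<close>; the family
  \<open>flat_exp k\<close> is closed under differentiation.\<close>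
definition flat_exp :: "nat \<Rightarrow> real \<Rightarrow> real" where
  "flat_exp k t = (if t > 0 then exp (-1/t) * inverse t ^ k else 0)"

lemma flat_exp_nonneg: "flat_exp k t \<ge> 0"
  by (simp add: flat_exp_def)

lemma flat_exp_pos: "t > 0 \<Longrightarrow> flat_exp k t > 0"
  by (simp add: flat_exp_def)

lemma flat_exp_eq_0: "t \<le> 0 \<Longrightarrow> flat_exp k t = 0"
  by (simp add: flat_exp_def)

lemma flat_exp_div_le: "\<bar>flat_exp k t / t\<bar> \<le> fact (k + 2) * \<bar>t\<bar>"
proof (cases "t > 0")
  case True
  define X where "X = 1 / t"
  have X: "X > 0" using True by (simp add: X_def)
  have "flat_exp k t / t = X ^ (k + 1) / exp X"
    using True by (simp add: flat_exp_def X_def exp_minus field_simps power_Suc)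
  also have "\<dots> \<le> X ^ (k + 1) / (X ^ (k + 2) / fact (k + 2))"
    by (rule divide_left_mono[OF power_div_fact_le_exp]) (use X in auto)
  also have "\<dots> = fact (k + 2) * t"
    using X True by (simp add: X_def field_simps power_Suc)
  finally show ?thesis using True flat_exp_nonneg[of k t] by simp
next
  case False
  then have "flat_exp k t = 0" by (simp add: flat_exp_eq_0)
  then show ?thesis by simp
qed

lemma inverse_power_has_real_derivative:
  "(t::real) \<noteq> 0 \<Longrightarrow> ((\<lambda>t. inverse t ^ k) has_real_derivative (- real k * inverse t ^ (k + 1))) (at t)"
proof (induction k)
  case (Suc k)
  have "((\<lambda>t. inverse t * inverse t ^ k) has_real_derivative
     (- (inverse t ^ Suc (Suc 0))) * inverse t ^ k + (- real k * inverse t ^ (k + 1)) * inverse t) (at t)"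
    by (rule DERIV_mult[OF DERIV_inverse[OF Suc.prems] Suc.IH[OF Suc.prems]])
  then show ?case by (simp add: algebra_simps power2_eq_square)
qed simp

lemma flat_exp_has_real_derivative:
  "(flat_exp k has_real_derivative (flat_exp (k + 2) t - real k * flat_exp (k + 1) t)) (at t)"
proof -
  consider "t > 0" | "t < 0" | "t = 0" by linarith
  then show ?thesis
  proof cases
    case 1
    have "((\<lambda>t. exp (-1/t)) has_real_derivative exp (-1/t) * inverse t ^ 2) (at t)"
      using 1 by (auto intro!: derivative_eq_intros simp: power2_eq_square field_simps)
    from DERIV_mult[OF this inverse_power_has_real_derivative[of t k]]
    have "((\<lambda>t. exp (-1/t) * inverse t ^ k) has_real_derivative
        (flat_exp (k + 2) t - real k * flat_exp (k + 1) t)) (at t)"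
      using 1 by (simp add: flat_exp_def algebra_simps power_add power2_eq_square)
    then show ?thesis
      by (rule has_field_derivative_transform_within_open[where S="{0<..}"])
         (use 1 in \<open>auto simp: flat_exp_def\<close>)
  next
    case 2
    have "((\<lambda>t. 0) has_real_derivative (flat_exp (k + 2) t - real k * flat_exp (k + 1) t)) (at t)"
      using 2 by (simp add: flat_exp_def)
    then show ?thesis
      by (rule has_field_derivative_transform_within_open[where S="{..<0}"])
         (use 2 in \<open>auto simp: flat_exp_def\<close>)
  next
    case 3
    have "((\<lambda>y. (flat_exp k y - flat_exp k 0) / (y - 0)) \<longlongrightarrow> 0) (at 0)"
    proof (rule Lim_null_comparison)
      show "\<forall>\<^sub>F y in at 0. norm ((flat_exp k y - flat_exp k 0) / (y - 0)) \<le> fact (k + 2) * \<bar>y\<bar>"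
        using flat_exp_div_le[of k] by (simp add: flat_exp_def)
      show "((\<lambda>y. fact (k + 2) * \<bar>y\<bar>) \<longlongrightarrow> (0::real)) (at 0)"
        by (rule tendsto_eq_intros refl)+ simp
    qed
    then show ?thesis
      using 3 by (simp add: has_field_derivative_iff flat_exp_def)
  qed
qed

lemma smooth_on_flat_exp: "smooth_on UNIV (flat_exp k)"
proof (rule smooth_on_real_deriv_closed[of UNIV "range flat_exp"])
  fix b assume "b \<in> range flat_exp"
  then obtain j where "b = flat_exp j" by blast
  moreover have "(\<lambda>t. flat_exp (j + 2) t + (- real j) * flat_exp (j + 1) t) \<in> poly_closure (range flat_exp)"
    by (intro poly_closure.add poly_closure.mult poly_closure.const poly_closure.base rangeI)
  ultimately show "\<exists>b'\<in>poly_closure (range flat_exp). \<forall>x\<in>UNIV. (b has_real_derivative b' x) (at x)"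
    using flat_exp_has_real_derivative[of j] by (intro bexI) simp_all
qed auto

lemma mono_flat_exp_0: "mono (flat_exp 0)"
proof (rule monoI)
  fix x y :: real assume "x \<le> y"
  have "(flat_exp 0 has_real_derivative flat_exp 2 t) (at t)" for t
    using flat_exp_has_real_derivative[of 0 t] by (simp add: numeral_2_eq_2)
  then show "flat_exp 0 x \<le> flat_exp 0 y"
    by (intro DERIV_nonneg_imp_nondecreasing[OF \<open>x \<le> y\<close>]) (use flat_exp_nonneg in auto)
qed

definition smooth_step :: "real \<Rightarrow> real" where
  "smooth_step x = flat_exp 0 x / (flat_exp 0 x + flat_exp 0 (1 - x))"

lemma smooth_step_denom_pos: "flat_exp 0 x + flat_exp 0 (1 - x) > 0"
  using flat_exp_pos[of x 0] flat_exp_pos[of "1 - x" 0] flat_exp_nonneg[of 0 x] flat_exp_nonneg[of 0 "1 - x"]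
  by (cases "x > 0") auto

lemma smooth_step_eq_0: "x \<le> 0 \<Longrightarrow> smooth_step x = 0"
  by (simp add: smooth_step_def flat_exp_eq_0)

lemma smooth_step_eq_1: "x \<ge> 1 \<Longrightarrow> smooth_step x = 1"
  using smooth_step_denom_pos[of x] by (simp add: smooth_step_def flat_exp_eq_0)

lemma smooth_step_bounds: "0 \<le> smooth_step x" "smooth_step x \<le> 1"
  using smooth_step_denom_pos[of x] flat_exp_nonneg[of 0 x] flat_exp_nonneg[of 0 "1 - x"]
  by (auto simp: smooth_step_def)

lemma mono_smooth_step: "mono smooth_step"
proof (rule monoI)
  fix x y :: real assume xy: "x \<le> y"
  have "flat_exp 0 x \<le> flat_exp 0 y" "flat_exp 0 (1 - y) \<le> flat_exp 0 (1 - x)"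
    using mono_flat_exp_0 xy by (simp_all add: monoD)
  then have "flat_exp 0 x * (flat_exp 0 y + flat_exp 0 (1 - y)) \<le>
             flat_exp 0 y * (flat_exp 0 x + flat_exp 0 (1 - x))"
    using flat_exp_nonneg[of 0 x] flat_exp_nonneg[of 0 "1 - y"] by (simp add: algebra_simps mult_mono)
  then show "smooth_step x \<le> smooth_step y"
    using smooth_step_denom_pos[of x] smooth_step_denom_pos[of y]
    by (simp add: smooth_step_def divide_simps)
qed

lemma smooth_on_smooth_step: "smooth_on UNIV smooth_step"
proof -
  have h: "smooth_on UNIV (flat_exp 0)" by (rule smooth_on_flat_exp)
  have h1: "smooth_on UNIV (\<lambda>x. flat_exp 0 ((-1) * x + 1))"
    by (rule smooth_on_compose[OF _ _ h smooth_on_affine]) auto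
  have "smooth_on UNIV (\<lambda>x. flat_exp 0 x * inverse (flat_exp 0 x + flat_exp 0 ((-1) * x + 1)))"
    by (intro smooth_on_mult h smooth_on_inverse_comp smooth_on_add h1)
       (use smooth_step_denom_pos in auto)
  then show ?thesis by (simp add: smooth_step_def[abs_def] divide_inverse)
qed

definition step_integral :: "real \<Rightarrow> real" where
  "step_integral y = integral {-1..y} smooth_step"

lemma continuous_on_smooth_step: "continuous_on S smooth_step"
  using smooth_on_imp_continuous_on[OF smooth_on_smooth_step] continuous_on_subset by blast

lemma step_integral_eq_0:
  assumes "y \<le> 0" shows "step_integral y = 0"
proof -
  have "integral {-1..y} smooth_step = integral {-1..y} (\<lambda>x. 0)"
    by (rule integral_cong) (use assms smooth_step_eq_0 in auto)
  then show ?thesis by (simp add: step_integral_def)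
qed

lemma smooth_step_integrable: "smooth_step integrable_on {a..b}"
  by (rule integrable_continuous_real) (rule continuous_on_smooth_step)

lemma step_integral_eq: "y \<ge> 1 \<Longrightarrow> step_integral y = step_integral 1 + (y - 1)"
proof -
  assume y: "y \<ge> 1"
  have "integral {-1..1} smooth_step + integral {1..y} smooth_step = integral {-1..y} smooth_step"
    using Henstock_Kurzweil_Integration.integral_combine[where a="-1" and c=1 and b=y and f=smooth_step] y smooth_step_integrable
    by simp
  moreover have "integral {1..y} smooth_step = integral {1..y} (\<lambda>x. 1)"
    by (rule integral_cong) (use smooth_step_eq_1 in auto)
  ultimately show ?thesis using y by (simp add: step_integral_def)
qed

lemma step_integral_1_bounds: "0 \<le> step_integral 1" "step_integral 1 \<le> 1"
proof -
  have "step_integral 1 = integral {0..1} smooth_step"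
    using step_integral_eq_0[of 0] smooth_step_integrable
      Henstock_Kurzweil_Integration.integral_combine[where a="-1" and c=0 and b=1 and f=smooth_step]
    by (simp add: step_integral_def)
  moreover note smooth_step_integrable[of 0 1]
  ultimately show "0 \<le> step_integral 1" "step_integral 1 \<le> 1"
    using integral_nonneg[of smooth_step "{0..1}"] integral_le[of smooth_step "{0..1}" "\<lambda>x. 1"]
      smooth_step_bounds by auto
qed

lemma step_integral_has_real_derivative: "(step_integral has_real_derivative smooth_step y) (at y)"
proof (cases "y > -1")
  case True
  have "(step_integral has_real_derivative smooth_step y) (at y within {-1..y + 1})"
    unfolding step_integral_def[abs_def]
    by (rule integral_has_real_derivative) (use True continuous_on_smooth_step in auto)
  moreover have "at y within {-1..y + 1} = at y"
    using True by (intro at_within_interior) auto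
  ultimately show ?thesis by simp
next
  case False
  have "((\<lambda>x. 0) has_real_derivative smooth_step y) (at y)"
    using False smooth_step_eq_0 by simp
  then show ?thesis
    by (rule has_field_derivative_transform_within_open[where S="{..<0}"])
       (use False step_integral_eq_0 in auto)
qed

text \<open>A smooth convex regularisation of \<open>max t 0\<close>; the shift is chosen so that it is exactly
  \<open>t\<close> for \<open>t \<ge> 1\<close>.\<close>
definition smooth_ramp :: "real \<Rightarrow> real" where
  "smooth_ramp t = step_integral (t + 1 - step_integral 1)"

lemma smooth_ramp_eq_0: "t \<le> -1 \<Longrightarrow> smooth_ramp t = 0"
  using step_integral_1_bounds by (simp add: smooth_ramp_def step_integral_eq_0)

lemma smooth_ramp_eq_id: "t \<ge> 1 \<Longrightarrow> smooth_ramp t = t"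
  using step_integral_1_bounds step_integral_eq[of "t + 1 - step_integral 1"]
  by (simp add: smooth_ramp_def)

lemma smooth_ramp_has_real_derivative:
  "(smooth_ramp has_real_derivative smooth_step (t + 1 - step_integral 1)) (at t)"
proof -
  have "((\<lambda>t. step_integral (t + 1 - step_integral 1)) has_real_derivative
      smooth_step (t + 1 - step_integral 1) * 1) (at t)"
    by (rule DERIV_chain2[OF step_integral_has_real_derivative]) (auto intro!: derivative_eq_intros)
  then show ?thesis by (simp add: smooth_ramp_def[abs_def])
qed

lemma deriv_smooth_ramp: "deriv smooth_ramp = (\<lambda>t. smooth_step (t + 1 - step_integral 1))"
  using smooth_ramp_has_real_derivative DERIV_imp_deriv by blast

lemma smooth_on_smooth_ramp_deriv: "smooth_on UNIV (\<lambda>t. smooth_step (t + 1 - step_integral 1))"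
  using smooth_on_compose[OF _ _ smooth_on_smooth_step smooth_on_affine[of 1 "1 - step_integral 1"]]
  by (simp add: algebra_simps)

lemma smooth_on_smooth_ramp: "smooth_on UNIV smooth_ramp"
  by (rule smooth_on_real_of_smooth_deriv[OF _ smooth_ramp_has_real_derivative smooth_on_smooth_ramp_deriv])
     simp

lemma deriv_smooth_ramp_bounds: "0 \<le> deriv smooth_ramp t" "deriv smooth_ramp t \<le> 1"
  by (simp_all add: deriv_smooth_ramp smooth_step_bounds)

lemma deriv2_smooth_ramp_nonneg: "0 \<le> deriv (deriv smooth_ramp) t"
  unfolding deriv_smooth_ramp
proof (rule mono_imp_deriv_nonneg)
  show "mono (\<lambda>t. smooth_step (t + 1 - step_integral 1))"
    by (rule monoI) (auto intro: monoD[OF mono_smooth_step])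
  show "(\<lambda>t. smooth_step (t + 1 - step_integral 1)) differentiable at t"
    using smooth_on_differentiable_at[OF smooth_on_smooth_ramp_deriv] by simp
qed

section \<open>Hessian and Levi form\<close>

lemma hess_eqI:
  assumes V: "open V" "x \<in> V"
    and d1: "\<And>y. y \<in> V \<Longrightarrow> (f has_derivative f' y) (at y)"
    and d2: "((\<lambda>y. f' y v) has_derivative D) (at x)"
  shows "hess f x v = D"
proof -
  have "frechet_derivative f (at y) = f' y" if "y \<in> V" for y
    using frechet_derivative_at[OF d1[OF that]] by simp
  then have "frechet_derivative (\<lambda>y. frechet_derivative f (at y) v) (at x) =
             frechet_derivative (\<lambda>y. f' y v) (at x)"
    by (intro frechet_derivative_eq_on_open[OF V]) simp
  also have "\<dots> = D" using frechet_derivative_at[OF d2] by simp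
  finally show ?thesis by (simp add: hess_def fun_eq_iff)
qed

lemma hess_add:
  assumes "open V" "x \<in> V" "smooth_on V f" "smooth_on V g"
  shows "hess (\<lambda>y. f y + g y) x v w = hess f x v w + hess g x v w"
proof -
  have "hess (\<lambda>y. f y + g y) x v = (\<lambda>w. hess f x v w + hess g x v w)"
  proof (rule hess_eqI[OF assms(1,2)])
    show "((\<lambda>y. f y + g y) has_derivative
        (\<lambda>v. frechet_derivative f (at y) v + frechet_derivative g (at y) v)) (at y)" if "y \<in> V" for y
      using assms that by (intro has_derivative_add smooth_on_has_derivative)
    show "((\<lambda>y. frechet_derivative f (at y) v + frechet_derivative g (at y) v) has_derivative
        (\<lambda>w. hess f x v w + hess g x v w)) (at x)"
      using assms by (intro has_derivative_add smooth_on_hess_has_derivative)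
  qed
  then show ?thesis by simp
qed

lemma hess_cmult:
  assumes "open V" "x \<in> V" "smooth_on V f"
  shows "hess (\<lambda>y. c * f y) x v w = c * hess f x v w"
proof -
  have "hess (\<lambda>y. c * f y) x v = (\<lambda>w. c * hess f x v w)"
  proof (rule hess_eqI[OF assms(1,2)])
    show "((\<lambda>y. c * f y) has_derivative (\<lambda>v. c * frechet_derivative f (at y) v)) (at y)"
      if "y \<in> V" for y
      using assms that by (intro has_derivative_mult_right smooth_on_has_derivative)
    show "((\<lambda>y. c * frechet_derivative f (at y) v) has_derivative (\<lambda>w. c * hess f x v w)) (at x)"
      using assms by (intro has_derivative_mult_right smooth_on_hess_has_derivative)
  qed
  then show ?thesis by simp
qed

lemma hess_compose:
  fixes g :: "real \<Rightarrow> real"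
  assumes V: "open V" "x \<in> V" and f: "smooth_on V f" and g: "smooth_on UNIV g"
  shows "hess (\<lambda>y. g (f y)) x v w =
    deriv (deriv g) (f x) * frechet_derivative f (at x) v * frechet_derivative f (at x) w
    + deriv g (f x) * hess f x v w"
proof -
  have dg: "(g has_derivative (\<lambda>t. deriv g z * t)) (at z)" for z
    using smooth_on_differentiable_at[OF g]
    by (simp add: DERIV_deriv_iff_real_differentiable[symmetric] has_field_derivative_def)
  have ddg: "(deriv g has_derivative (\<lambda>t. deriv (deriv g) z * t)) (at z)" for z
    using smooth_on_differentiable_at[OF smooth_on_deriv[OF g]]
    by (simp add: DERIV_deriv_iff_real_differentiable[symmetric] has_field_derivative_def)
  have "hess (\<lambda>y. g (f y)) x v = (\<lambda>w. deriv g (f x) * hess f x v w +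
      deriv (deriv g) (f x) * frechet_derivative f (at x) w * frechet_derivative f (at x) v)"
  proof (rule hess_eqI[OF V])
    fix y assume "y \<in> V"
    show "((\<lambda>y. g (f y)) has_derivative (\<lambda>v. deriv g (f y) * frechet_derivative f (at y) v)) (at y)"
      using has_derivative_compose[OF smooth_on_has_derivative[OF f V(1) \<open>y \<in> V\<close>] dg] .
  next
    have "((\<lambda>y. deriv g (f y)) has_derivative
        (\<lambda>w. deriv (deriv g) (f x) * frechet_derivative f (at x) w)) (at x)"
      using has_derivative_compose[OF smooth_on_has_derivative[OF f V] ddg] .
    from has_derivative_mult[OF this smooth_on_hess_has_derivative[OF f V]]
    show "((\<lambda>y. deriv g (f y) * frechet_derivative f (at y) v) has_derivative
        (\<lambda>w. deriv g (f x) * hess f x v w +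
           deriv (deriv g) (f x) * frechet_derivative f (at x) w * frechet_derivative f (at x) v)) (at x)"
      by (rule has_derivative_eq_rhs) (simp add: fun_eq_iff algebra_simps)
  qed
  then show ?thesis by (simp add: algebra_simps)
qed

lemma linear_hess:
  assumes "open V" "x \<in> V" "smooth_on V f"
  shows "linear (hess f x v)"
  using smooth_on_hess_has_derivative[OF assms(3,1,2)] has_derivative_linear by blast

lemma linear_hess_left:
  assumes V: "open V" "x \<in> V" and f: "smooth_on V f"
  shows "linear (\<lambda>v. hess f x v w)"
proof -
  have lin: "linear (frechet_derivative f (at y))" if "y \<in> V" for y
    using smooth_on_differentiable_at[OF f V(1) that] by (rule linear_frechet_derivative)
  have "hess f x (v1 + v2) = (\<lambda>w. hess f x v1 w + hess f x v2 w)" for v1 v2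
  proof (rule hess_eqI[OF V smooth_on_has_derivative[OF f V(1)]])
    show "((\<lambda>y. frechet_derivative f (at y) (v1 + v2)) has_derivative
        (\<lambda>w. hess f x v1 w + hess f x v2 w)) (at x)"
      by (rule has_derivative_transform_within_open[OF has_derivative_add[OF
            smooth_on_hess_has_derivative[OF f V] smooth_on_hess_has_derivative[OF f V]] V])
         (simp add: linear_add[OF lin])
  qed
  moreover have "hess f x (c *\<^sub>R v) = (\<lambda>w. c * hess f x v w)" for c v
  proof (rule hess_eqI[OF V smooth_on_has_derivative[OF f V(1)]])
    show "((\<lambda>y. frechet_derivative f (at y) (c *\<^sub>R v)) has_derivative (\<lambda>w. c * hess f x v w)) (at x)"
      by (rule has_derivative_transform_within_open[OF has_derivative_mult_right[OF
            smooth_on_hess_has_derivative[OF f V]] V])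
         (simp add: linear_scale[OF lin])
  qed
  ultimately show ?thesis by (intro linearI) simp_all
qed

lemma continuous_on_hess:
  assumes "smooth_on V f"
  shows "continuous_on V (\<lambda>x. hess f x v w)"
  using smooth_on_imp_continuous_on[OF smooth_on_frechet_derivative[OF smooth_on_frechet_derivative[OF assms]]]
  by (simp add: hess_def)

definition levi_form :: "(complex ^ 'm \<Rightarrow> real) \<Rightarrow> complex ^ 'm \<Rightarrow> complex ^ 'm \<Rightarrow> real" where
  "levi_form f x v = hess f x v v + hess f x (Jc v) (Jc v)"

lemma strictly_psh_on_iff_levi_form:
  "strictly_psh_on U f \<longleftrightarrow> (\<forall>x\<in>U. \<forall>v. v \<noteq> 0 \<longrightarrow> levi_form f x v > 0)"
  by (simp add: strictly_psh_on_def levi_form_def)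

lemma strictly_psh_on_subset: "strictly_psh_on U f \<Longrightarrow> V \<subseteq> U \<Longrightarrow> strictly_psh_on V f"
  by (auto simp: strictly_psh_on_def)

lemma levi_form_eq_on_open:
  assumes "open V" "x \<in> V" "\<And>y. y \<in> V \<Longrightarrow> f y = g y"
  shows "levi_form f x v = levi_form g x v"
  using hess_eq_on_open[OF assms] by (simp add: levi_form_def)

lemma levi_form_add:
  assumes "open V" "x \<in> V" "smooth_on V f" "smooth_on V g"
  shows "levi_form (\<lambda>y. f y + g y) x v = levi_form f x v + levi_form g x v"
  using hess_add[OF assms] by (simp add: levi_form_def)

lemma levi_form_cmult:
  assumes "open V" "x \<in> V" "smooth_on V f"
  shows "levi_form (\<lambda>y. c * f y) x v = c * levi_form f x v"
  using hess_cmult[OF assms] by (simp add: levi_form_def algebra_simps)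

lemma Jc_add: "Jc (v + w) = Jc v + Jc w"
  by (simp add: Jc_def vec_eq_iff algebra_simps)

lemma Jc_scaleR: "Jc (c *\<^sub>R v) = c *\<^sub>R Jc v"
  by (simp add: Jc_def vec_eq_iff scaleR_conv_of_real)

lemma linear_Jc: "linear Jc"
  by (rule linearI) (simp_all add: Jc_add Jc_scaleR)

lemma inner_Jc_same: "inner v (Jc v) = 0"
  by (simp add: inner_vec_def Jc_def inner_complex_def algebra_simps)

lemma inner_Jc_Jc: "inner (Jc v) (Jc w) = inner v w"
  by (simp add: inner_vec_def Jc_def inner_complex_def algebra_simps)

lemma levi_form_scaleR:
  assumes "open V" "x \<in> V" "smooth_on V f"
  shows "levi_form f x (r *\<^sub>R v) = r\<^sup>2 * levi_form f x v"
  using linear_scale[OF linear_hess[OF assms]] linear_scale[OF linear_hess_left[OF assms]]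
  by (simp add: levi_form_def Jc_scaleR power2_eq_square algebra_simps)

lemma continuous_on_levi_form:
  assumes V: "open V" and f: "smooth_on V f"
  shows "continuous_on (V \<times> UNIV) (\<lambda>(x, v). levi_form f x v)"
proof -
  have hess_expand: "hess f x u w = (\<Sum>i\<in>Basis. \<Sum>j\<in>Basis. (u \<bullet> i) * (w \<bullet> j) * hess f x i j)"
    if "x \<in> V" for x u w
  proof -
    have left: "hess f x u' w' = (\<Sum>i\<in>Basis. (u' \<bullet> i) * hess f x i w')" for u' w'
      using linear_sum[OF linear_hess_left[OF V that f, of w'], of "\<lambda>i. (u' \<bullet> i) *\<^sub>R i" Basis]
        linear_scale[OF linear_hess_left[OF V that f, of w']]
      by (simp add: euclidean_representation)
    have right: "hess f x u' w' = (\<Sum>j\<in>Basis. (w' \<bullet> j) * hess f x u' j)" for u' w'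
      using linear_sum[OF linear_hess[OF V that f, of u'], of "\<lambda>j. (w' \<bullet> j) *\<^sub>R j" Basis]
        linear_scale[OF linear_hess[OF V that f, of u']]
      by (simp add: euclidean_representation)
    have "hess f x u w = (\<Sum>i\<in>Basis. (u \<bullet> i) * hess f x i w)" by (rule left)
    also have "\<dots> = (\<Sum>i\<in>Basis. (u \<bullet> i) * (\<Sum>j\<in>Basis. (w \<bullet> j) * hess f x i j))"
      by (simp only: right[of _ w])
    finally show ?thesis by (simp add: sum_distrib_left mult.assoc)
  qed
  have c: "continuous_on (V \<times> UNIV) (\<lambda>p. hess f (fst p) i j)" for i j
    by (rule continuous_on_compose2[OF continuous_on_hess[OF f] continuous_on_fst]) auto
  have "continuous_on UNIV Jc"
    using linear_conv_bounded_linear[THEN iffD1, OF linear_Jc] by (rule linear_continuous_on)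
  then have cJ: "continuous_on (V \<times> UNIV) (\<lambda>p. Jc (snd p))"
    by (rule continuous_on_compose2[OF _ continuous_on_snd]) auto
  have "continuous_on (V \<times> UNIV) (\<lambda>p. \<Sum>i\<in>Basis. \<Sum>j\<in>Basis.
      (snd p \<bullet> i) * (snd p \<bullet> j) * hess f (fst p) i j
      + (Jc (snd p) \<bullet> i) * (Jc (snd p) \<bullet> j) * hess f (fst p) i j)"
    by (intro continuous_intros c cJ)
  then show ?thesis
    by (rule continuous_on_eq) (auto simp: levi_form_def hess_expand sum.distrib algebra_simps)
qed

lemma levi_form_min_on_compact:
  fixes f :: "complex ^ 'm \<Rightarrow> real"
  assumes V: "open V" and f: "smooth_on V f" and C: "compact C" "C \<subseteq> V" "C \<noteq> {}"
  obtains x0 v0 where "x0 \<in> C" "norm v0 = 1"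
    "\<And>x v. x \<in> C \<Longrightarrow> levi_form f x0 v0 * (norm v)\<^sup>2 \<le> levi_form f x v"
proof -
  have K: "compact (C \<times> sphere (0::complex^'m) 1)"
    using C(1) compact_sphere by (rule compact_Times)
  have "continuous_on (C \<times> sphere 0 1) (\<lambda>(x, v). levi_form f x v)"
    by (rule continuous_on_subset[OF continuous_on_levi_form[OF V f]]) (use C in auto)
  then obtain p0 where p0: "p0 \<in> C \<times> sphere 0 1"
    "\<And>p. p \<in> C \<times> sphere 0 1 \<Longrightarrow> levi_form f (fst p0) (snd p0) \<le> levi_form f (fst p) (snd p)"
    using continuous_attains_inf[OF K] C(3) by (fastforce simp: case_prod_unfold)
  have xV: "x \<in> V" if "x \<in> C" for x using that C(2) by blast
  have "levi_form f (fst p0) (snd p0) * (norm v)\<^sup>2 \<le> levi_form f x v" if x: "x \<in> C" for x v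
  proof (cases "v = 0")
    case True
    with xV[OF x] show ?thesis
      using levi_form_scaleR[OF V _ f, of x 0 v] by simp
  next
    case False
    define u where "u = (1 / norm v) *\<^sub>R v"
    have "norm u = 1" using False by (simp add: u_def)
    then have "levi_form f (fst p0) (snd p0) \<le> levi_form f x u" using p0(2)[of "(x, u)"] x by simp
    moreover have "levi_form f x v = (norm v)\<^sup>2 * levi_form f x u"
      using levi_form_scaleR[OF V xV[OF x] f, of "norm v" u] False by (simp add: u_def)
    ultimately show ?thesis by (metis mult.commute mult_right_mono zero_le_power2)
  qed
  with p0(1) that show thesis by auto
qed

lemma levi_form_bounded_below_on_compact:
  assumes "open V" "smooth_on V f" "compact C" "C \<subseteq> V"
  obtains K where "K \<ge> 0" "\<And>x v. x \<in> C \<Longrightarrow> - K * (norm v)\<^sup>2 \<le> levi_form f x v"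
proof (cases "C = {}")
  case False
  then obtain x0 v0 where min: "\<And>x v. x \<in> C \<Longrightarrow> levi_form f x0 v0 * (norm v)\<^sup>2 \<le> levi_form f x v"
    using levi_form_min_on_compact[OF assms] by metis
  define K where "K = max 0 (- levi_form f x0 v0)"
  have "- K * (norm v)\<^sup>2 \<le> levi_form f x v" if "x \<in> C" for x v
  proof -
    have "- K \<le> levi_form f x0 v0" by (simp add: K_def)
    then have "- K * (norm v)\<^sup>2 \<le> levi_form f x0 v0 * (norm v)\<^sup>2" by (rule mult_right_mono) simp
    with min[OF that, of v] show ?thesis by linarith
  qed
  then show thesis by (intro that[of K]) (simp_all add: K_def)
qed (use that in auto)

lemma levi_form_uniformly_pos_on_compact:
  assumes "open V" "smooth_on V f" "compact C" "C \<subseteq> V"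
    and pos: "\<And>x v. x \<in> C \<Longrightarrow> v \<noteq> 0 \<Longrightarrow> levi_form f x v > 0"
  obtains c where "c > 0" "\<And>x v. x \<in> C \<Longrightarrow> c * (norm v)\<^sup>2 \<le> levi_form f x v"
proof (cases "C = {}")
  case False
  then obtain x0 v0 where "x0 \<in> C" "norm v0 = 1"
    "\<And>x v. x \<in> C \<Longrightarrow> levi_form f x0 v0 * (norm v)\<^sup>2 \<le> levi_form f x v"
    using levi_form_min_on_compact[OF assms(1-4)] by metis
  moreover from this(2) have "v0 \<noteq> 0" by (metis norm_zero zero_neq_one)
  with \<open>x0 \<in> C\<close> have "levi_form f x0 v0 > 0" by (rule pos)
  ultimately show thesis using that by blast
qed (use that in \<open>auto intro: zero_less_one\<close>)

lemma bessel_two_orthogonal: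
  fixes Z V W :: "'a::real_inner"
  assumes "inner V W = 0" and "inner W W = inner V V"
  shows "(inner Z V)\<^sup>2 + (inner Z W)\<^sup>2 \<le> inner Z Z * inner V V"
proof -
  define a b n where "a = inner Z V" and "b = inner Z W" and "n = inner V V"
  have "0 \<le> inner (n *\<^sub>R Z - a *\<^sub>R V - b *\<^sub>R W) (n *\<^sub>R Z - a *\<^sub>R V - b *\<^sub>R W)" by simp
  also have "\<dots> = n * (n * inner Z Z - (a\<^sup>2 + b\<^sup>2))"
    using assms by (simp add: inner_diff_left inner_diff_right inner_commute a_def b_def n_def
        power2_eq_square algebra_simps)
  finally have *: "0 \<le> n * (n * inner Z Z - (a\<^sup>2 + b\<^sup>2))" .
  show ?thesis
  proof (cases "n = 0")
    case True
    then have "V = 0" "W = 0" using assms(2) by (auto simp: n_def)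
    then show ?thesis by simp
  next
    case False
    then have "n > 0" by (simp add: n_def)
    then have "0 \<le> n * inner Z Z - (a\<^sup>2 + b\<^sup>2)" using * by (simp add: zero_le_mult_iff)
    then show ?thesis by (simp add: a_def b_def n_def mult.commute)
  qed
qed

lemma smooth_on_inner_self: "open U \<Longrightarrow> smooth_on U (\<lambda>z::'a::euclidean_space. inner z z)"
proof -
  assume U: "open U"
  have "smooth_on U (\<lambda>z::'a. \<Sum>b\<in>Basis. inner z b * inner z b)"
    by (intro smooth_on_sum smooth_on_mult U smooth_on_bounded_linear bounded_linear_inner_left) auto
  then show ?thesis by (simp add: euclidean_inner[symmetric])
qed

definition log_norm_sq :: "'a::real_inner \<Rightarrow> real" where
  "log_norm_sq z = ln (inner z z)"

lemma smooth_on_log_norm_sq: "smooth_on (UNIV - {0}) (log_norm_sq :: 'a::euclidean_space \<Rightarrow> real)"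
  unfolding log_norm_sq_def[abs_def] by (rule smooth_on_ln_comp) (auto intro!: smooth_on_inner_self)

lemma log_norm_sq_has_derivative:
  fixes y :: "'a::real_inner"
  assumes "y \<noteq> 0"
  shows "(log_norm_sq has_derivative (\<lambda>v. 2 * inner y v / inner y y)) (at y)"
proof -
  have "((\<lambda>z. inner z z) has_derivative (\<lambda>h. inner y h + inner h y)) (at y)"
    by (rule has_derivative_inner[OF has_derivative_ident has_derivative_ident])
  moreover have "(ln has_derivative (\<lambda>h. inverse (inner y y) * h)) (at (inner y y))"
    using DERIV_ln[of "inner y y"] assms by (simp add: has_field_derivative_def)
  ultimately have "((\<lambda>z. ln (inner z z)) has_derivative
      (\<lambda>h. inverse (inner y y) * (inner y h + inner h y))) (at y)"
    by (rule has_derivative_compose)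
  then show ?thesis unfolding log_norm_sq_def[abs_def]
    by (rule has_derivative_eq_rhs) (simp add: fun_eq_iff inner_commute field_simps)
qed

lemma levi_form_log_norm_sq_nonneg:
  assumes x: "x \<noteq> 0" shows "levi_form log_norm_sq x v \<ge> 0"
proof -
  have V: "open (UNIV - {0::complex^'m})" "x \<in> UNIV - {0}" using x by auto
  have h: "hess log_norm_sq x u =
      (\<lambda>w. 2 * inner w u / inner x x - 2 * inner x u * (2 * inner x w) / (inner x x)\<^sup>2)" for u
  proof (rule hess_eqI[OF V])
    show "\<And>y. y \<in> UNIV - {0} \<Longrightarrow> (log_norm_sq has_derivative (\<lambda>v. 2 * inner y v / inner y y)) (at y)"
      using log_norm_sq_has_derivative by auto
    show "((\<lambda>y. 2 * inner y u / inner y y) has_derivative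
       (\<lambda>w. 2 * inner w u / inner x x - 2 * inner x u * (2 * inner x w) / (inner x x)\<^sup>2)) (at x)"
      by (rule has_derivative_eq_rhs, (rule derivative_intros)+)
         (use x in \<open>auto simp: fun_eq_iff inner_commute field_simps power2_eq_square\<close>)
  qed
  define N where "N = inner x x"
  have N: "N > 0" using x by (simp add: N_def)
  have "(inner x v)\<^sup>2 + (inner x (Jc v))\<^sup>2 \<le> N * inner v v"
    unfolding N_def by (rule bessel_two_orthogonal) (simp_all add: inner_Jc_same inner_Jc_Jc)
  moreover have "levi_form log_norm_sq x v = 4 * (N * inner v v - (inner x v)\<^sup>2 - (inner x (Jc v))\<^sup>2) / N\<^sup>2"
    using N by (simp add: levi_form_def h N_def[symmetric] inner_Jc_Jc field_simps power2_eq_square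
        inner_commute)
  ultimately show ?thesis using N by simp
qed

section \<open>The radius function\<close>

lemma has_derivative_vec_nth [derivative_intros]:
  "(f has_derivative f') F \<Longrightarrow> ((\<lambda>x. f x $ i) has_derivative (\<lambda>h. f' h $ i)) F"
  by (rule bounded_linear.has_derivative[OF bounded_linear_vec_nth])

lemma ex_nonzero_component: "z \<noteq> (0::'a::zero^'m) \<Longrightarrow> \<exists>a. z $ a \<noteq> 0"
  by (simp add: vec_eq_iff)

text \<open>\<^term>\<open>flow_norm_sq lam z s\<close> is \<open>|lflow lam (-s) z|\<^sup>2\<close>; for \<open>z \<noteq> 0\<close> it decreases strictly
  from \<open>\<infinity>\<close> to \<open>0\<close>, so \<open>ln r\<^sub>\<lambda>(z)\<close> is the unique \<open>s\<close> where it equals \<open>1\<close>.\<close>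
definition flow_norm_sq :: "('m::finite \<Rightarrow> real) \<Rightarrow> complex ^ 'm \<Rightarrow> real \<Rightarrow> real" where
  "flow_norm_sq lam z s = (\<Sum>a\<in>UNIV. exp (- 2 * lam a * s) * inner (z $ a) (z $ a))"

lemma flow_norm_sq_0: "flow_norm_sq lam z 0 = inner z z"
  by (simp add: flow_norm_sq_def inner_vec_def)

lemma flow_norm_sq_lflow: "flow_norm_sq lam (lflow lam s z) u = flow_norm_sq lam z (u - s)"
proof -
  have "exp (- 2 * lam a * u) * inner (lflow lam s z $ a) (lflow lam s z $ a) =
        exp (- 2 * lam a * (u - s)) * inner (z $ a) (z $ a)" for a
  proof -
    have "inner (lflow lam s z $ a) (lflow lam s z $ a) = (exp (lam a * s))\<^sup>2 * inner (z $ a) (z $ a)"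
      by (simp add: lflow_def inner_complex_def power2_eq_square algebra_simps)
    moreover have "exp (- 2 * lam a * u) * (exp (lam a * s))\<^sup>2 = exp (- 2 * lam a * (u - s))"
      by (simp add: power2_eq_square exp_add[symmetric] algebra_simps)
    ultimately show ?thesis by (simp add: mult.assoc[symmetric])
  qed
  then show ?thesis by (simp add: flow_norm_sq_def)
qed

lemma flow_norm_sq_strict_decreasing:
  assumes lam: "\<And>a. lam a > 0" and z: "z \<noteq> 0" and s: "s < s'"
  shows "flow_norm_sq lam z s' < flow_norm_sq lam z s"
proof -
  obtain b where b: "z $ b \<noteq> 0" using ex_nonzero_component[OF z] by blast
  have "exp (- 2 * lam a * s') * inner (z $ a) (z $ a) \<le> exp (- 2 * lam a * s) * inner (z $ a) (z $ a)" for a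
    using lam[of a] s by (intro mult_right_mono) auto
  moreover have "exp (- 2 * lam b * s') * inner (z $ b) (z $ b) < exp (- 2 * lam b * s) * inner (z $ b) (z $ b)"
    using lam[of b] s b by (intro mult_strict_right_mono) auto
  ultimately show ?thesis unfolding flow_norm_sq_def by (intro sum_strict_mono_ex1) auto
qed

lemma flow_norm_sq_inj:
  assumes "\<And>a. lam a > 0" "z \<noteq> 0" "flow_norm_sq lam z s = flow_norm_sq lam z s'"
  shows "s = s'"
  using flow_norm_sq_strict_decreasing[of lam z s s'] flow_norm_sq_strict_decreasing[of lam z s' s] assms
  by (cases s s' rule: linorder_cases) auto

lemma flow_norm_sq_surj:
  assumes lam: "\<And>a. lam a > 0" and z: "z \<noteq> 0" and c: "c > 0"
  shows "\<exists>s. flow_norm_sq lam z s = c"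
proof -
  obtain b where b: "z $ b \<noteq> 0" using ex_nonzero_component[OF z] by blast
  define q where "q = inner (z $ b) (z $ b)"
  have q: "q > 0" using b by (simp add: q_def)
  define lm where "lm = Min (range lam)"
  have lm: "lm > 0" "\<And>a. lm \<le> lam a" using lam by (auto simp: lm_def)
  define N where "N = inner z z"
  have N: "N > 0" using z by (simp add: N_def)
  define s1 where "s1 = - \<bar>ln (c / q)\<bar> / (2 * lam b)"
  define s2 where "s2 = \<bar>ln (N / c)\<bar> / (2 * lm)"
  have s1: "s1 \<le> 0" using lam[of b] by (simp add: s1_def divide_nonpos_pos)
  have s2: "s2 \<ge> 0" using lm by (simp add: s2_def)
  have "c / q \<le> exp (- 2 * lam b * s1)"
  proof -
    have "exp (ln (c / q)) \<le> exp \<bar>ln (c / q)\<bar>" by simp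
    then show ?thesis using lam[of b] c q by (simp add: s1_def)
  qed
  then have "c \<le> exp (- 2 * lam b * s1) * q" using q by (simp add: divide_le_eq)
  also have "\<dots> \<le> flow_norm_sq lam z s1" unfolding flow_norm_sq_def q_def
    by (rule member_le_sum) auto
  finally have g1: "c \<le> flow_norm_sq lam z s1" .
  have "flow_norm_sq lam z s2 \<le> (\<Sum>a\<in>UNIV. exp (- 2 * lm * s2) * inner (z $ a) (z $ a))"
    unfolding flow_norm_sq_def by (intro sum_mono mult_right_mono) (use lm s2 in \<open>auto simp: mult_right_mono\<close>)
  also have "\<dots> = exp (- 2 * lm * s2) * N" by (simp add: N_def inner_vec_def sum_distrib_left)
  also have "\<dots> \<le> c"
  proof -
    have "exp (- 2 * lm * s2) \<le> exp (ln (c / N))"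
      using lm c N by (simp add: s2_def ln_div)
    then show ?thesis using c N by (simp add: le_divide_eq)
  qed
  finally have g2: "flow_norm_sq lam z s2 \<le> c" .
  have "continuous_on {s1..s2} (flow_norm_sq lam z)"
    unfolding flow_norm_sq_def[abs_def] by (intro continuous_intros)
  then show ?thesis using IVT2'[of "flow_norm_sq lam z" s2 c s1, OF g2 g1] s1 s2 by force
qed

definition flow_time :: "('m::finite \<Rightarrow> real) \<Rightarrow> complex ^ 'm \<Rightarrow> real \<Rightarrow> real" where
  "flow_time lam z c = (THE s. flow_norm_sq lam z s = c)"

lemma flow_time_unique:
  assumes "\<And>a. lam a > 0" "z \<noteq> 0" "flow_norm_sq lam z s = c"
  shows "flow_time lam z c = s"
  unfolding flow_time_def using flow_norm_sq_inj[of lam, OF assms(1,2)] assms(3) by blast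

lemma flow_norm_sq_flow_time:
  assumes "\<And>a. lam a > 0" "z \<noteq> 0" "c > 0"
  shows "flow_norm_sq lam z (flow_time lam z c) = c"
  using flow_norm_sq_surj[of lam, OF assms] flow_time_unique[of lam, OF assms(1,2)] by metis

lemma flow_time_less_iff:
  assumes "\<And>a. lam a > 0" "z \<noteq> 0" "c > 0"
  shows "flow_time lam z c < b \<longleftrightarrow> flow_norm_sq lam z b < c"
  using flow_norm_sq_strict_decreasing[of lam, OF assms(1,2), of b "flow_time lam z c"]
    flow_norm_sq_strict_decreasing[of lam, OF assms(1,2), of "flow_time lam z c" b]
    flow_norm_sq_flow_time[of lam, OF assms]
  by (cases b "flow_time lam z c" rule: linorder_cases) auto

lemma flow_time_greater_iff:
  assumes "\<And>a. lam a > 0" "z \<noteq> 0" "c > 0"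
  shows "b < flow_time lam z c \<longleftrightarrow> c < flow_norm_sq lam z b"
  using flow_norm_sq_strict_decreasing[of lam, OF assms(1,2), of b "flow_time lam z c"]
    flow_norm_sq_strict_decreasing[of lam, OF assms(1,2), of "flow_time lam z c" b]
    flow_norm_sq_flow_time[of lam, OF assms]
  by (cases b "flow_time lam z c" rule: linorder_cases) auto

lemma open_nonzero_times_pos: "open {p :: (complex ^ 'm) \<times> real. fst p \<noteq> 0 \<and> snd p > 0}"
proof -
  have "{p :: (complex ^ 'm) \<times> real. fst p \<noteq> 0 \<and> snd p > 0} = (UNIV - {0}) \<times> {0<..}" by auto
  then show ?thesis by (simp add: open_Times open_Diff)
qed

lemma continuous_flow_time:
  fixes z0 :: "complex ^ 'm::finite"
  assumes lam: "\<And>a. lam a > 0" and z0: "z0 \<noteq> 0" and c0: "c0 > 0"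
  shows "continuous (at (z0, c0)) (\<lambda>p. flow_time lam (fst p) (snd p))"
proof -
  have ev: "\<forall>\<^sub>F p in at (z0, c0). fst p \<noteq> 0 \<and> snd p > 0"
    using open_nonzero_times_pos z0 c0 unfolding eventually_at_topological by (intro exI) auto
  have lim: "((\<lambda>p. flow_norm_sq lam (fst p) b - snd p) \<longlongrightarrow> flow_norm_sq lam z0 b - c0) (at (z0, c0))" for b
  proof -
    have "continuous_on UNIV (\<lambda>p::(complex ^ 'm) \<times> real. flow_norm_sq lam (fst p) b - snd p)"
      unfolding flow_norm_sq_def by (intro continuous_intros)
    then show ?thesis by (simp add: continuous_on_eq_continuous_at isCont_def)
  qed
  have "((\<lambda>p. flow_time lam (fst p) (snd p)) \<longlongrightarrow> flow_time lam z0 c0) (at (z0, c0))"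
  proof (rule order_tendstoI)
    fix b assume "flow_time lam z0 c0 < b"
    then have "flow_norm_sq lam z0 b - c0 < 0" using flow_time_less_iff[of lam, OF lam z0 c0] by simp
    then have "\<forall>\<^sub>F p in at (z0, c0). flow_norm_sq lam (fst p) b - snd p < 0"
      using lim[of b] order_tendstoD(2) by blast
    then show "\<forall>\<^sub>F p in at (z0, c0). flow_time lam (fst p) (snd p) < b"
      using ev by eventually_elim (use flow_time_less_iff[of lam, OF lam] in auto)
  next
    fix b assume "b < flow_time lam z0 c0"
    then have "flow_norm_sq lam z0 b - c0 > 0" using flow_time_greater_iff[of lam, OF lam z0 c0] by simp
    then have "\<forall>\<^sub>F p in at (z0, c0). flow_norm_sq lam (fst p) b - snd p > 0"
      using lim[of b] order_tendstoD(1) by blast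
    then show "\<forall>\<^sub>F p in at (z0, c0). b < flow_time lam (fst p) (snd p)"
      using ev by eventually_elim (use flow_time_greater_iff[of lam, OF lam] in auto)
  qed
  then show ?thesis by (simp add: continuous_def)
qed

definition weighted_inner ::
    "('m::finite \<Rightarrow> real) \<Rightarrow> nat \<Rightarrow> real \<Rightarrow> complex ^ 'm \<Rightarrow> complex ^ 'm \<Rightarrow> real" where
  "weighted_inner lam k s u v = (\<Sum>a\<in>UNIV. lam a ^ k * exp (- 2 * lam a * s) * inner (u $ a) (v $ a))"

lemma flow_norm_sq_eq_weighted_inner: "flow_norm_sq lam z s = weighted_inner lam 0 s z z"
  by (simp add: flow_norm_sq_def weighted_inner_def)

lemma weighted_inner_commute: "weighted_inner lam k s u v = weighted_inner lam k s v u"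
  by (simp add: weighted_inner_def inner_commute)

lemma weighted_inner_Jc_Jc: "weighted_inner lam k s (Jc u) (Jc v) = weighted_inner lam k s u v"
  by (simp add: weighted_inner_def Jc_def inner_complex_def algebra_simps)

lemma linear_weighted_inner: "linear (weighted_inner lam k s u)"
  by (rule linearI) (simp_all add: weighted_inner_def inner_add_right sum.distrib sum_distrib_left
      algebra_simps)

lemma weighted_inner_self_nonneg: "(\<And>a. lam a > 0) \<Longrightarrow> weighted_inner lam k s v v \<ge> 0"
  unfolding weighted_inner_def by (intro sum_nonneg) (simp add: less_imp_le)

lemma weighted_inner_self_pos:
  assumes lam: "\<And>a. lam a > 0" and v: "v \<noteq> 0"
  shows "weighted_inner lam k s v v > 0"
proof -
  obtain b where "v $ b \<noteq> 0" using ex_nonzero_component[OF v] by blast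
  then show ?thesis
    unfolding weighted_inner_def using lam by (intro sum_pos2[where i=b]) (auto simp: less_imp_le)
qed

lemma weighted_inner_has_derivative:
  assumes t: "(t has_derivative t') (at x)" and u: "(u has_derivative u') (at x)"
    and v: "(v has_derivative v') (at x)"
  shows "((\<lambda>y. weighted_inner lam k (t y) (u y) (v y)) has_derivative
    (\<lambda>w. weighted_inner lam k (t x) (u' w) (v x) + weighted_inner lam k (t x) (u x) (v' w)
        - 2 * t' w * weighted_inner lam (k + 1) (t x) (u x) (v x))) (at x)"
proof -
  have "((\<lambda>y. lam a ^ k * exp (- 2 * lam a * t y) * inner (u y $ a) (v y $ a)) has_derivative
      (\<lambda>w. lam a ^ k * exp (- 2 * lam a * t x) * inner (u' w $ a) (v x $ a)
         + lam a ^ k * exp (- 2 * lam a * t x) * inner (u x $ a) (v' w $ a)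
         - 2 * t' w * (lam a ^ (k + 1) * exp (- 2 * lam a * t x) * inner (u x $ a) (v x $ a)))) (at x)"
    for a
    by (rule has_derivative_eq_rhs, (rule derivative_eq_intros t u v refl)+) (simp add: fun_eq_iff algebra_simps)
  then have "((\<lambda>y. \<Sum>a\<in>UNIV. lam a ^ k * exp (- 2 * lam a * t y) * inner (u y $ a) (v y $ a)) has_derivative
      (\<lambda>w. \<Sum>a\<in>UNIV. lam a ^ k * exp (- 2 * lam a * t x) * inner (u' w $ a) (v x $ a)
         + lam a ^ k * exp (- 2 * lam a * t x) * inner (u x $ a) (v' w $ a)
         - 2 * t' w * (lam a ^ (k + 1) * exp (- 2 * lam a * t x) * inner (u x $ a) (v x $ a)))) (at x)"
    by (rule has_derivative_sum)
  then show ?thesis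
    by (simp add: weighted_inner_def sum.distrib sum_subtractf sum_distrib_left)
qed

lemma flow_norm_sq_has_derivative:
  "((\<lambda>p. flow_norm_sq lam (fst p) (snd p)) has_derivative
     (\<lambda>q. 2 * weighted_inner lam 0 s z (fst q) - 2 * snd q * weighted_inner lam 1 s z z)) (at (z, s))"
proof -
  have "weighted_inner lam 0 s h z = weighted_inner lam 0 s z h" for h
    by (rule weighted_inner_commute)
  then show ?thesis
    unfolding flow_norm_sq_eq_weighted_inner
    by (intro has_derivative_eq_rhs[OF weighted_inner_has_derivative[OF has_derivative_snd[OF
          has_derivative_ident] has_derivative_fst[OF has_derivative_ident]
          has_derivative_fst[OF has_derivative_ident]]]) (simp add: fun_eq_iff)
qed

lemma flow_time_has_derivative:
  fixes z :: "complex ^ 'm::finite"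
  assumes lam: "\<And>a. lam a > 0" and z: "z \<noteq> 0" and c: "c > 0"
  defines "s \<equiv> flow_time lam z c"
  shows "((\<lambda>p. (fst p, flow_time lam (fst p) (snd p))) has_derivative
     (\<lambda>q. (fst q, (2 * weighted_inner lam 0 s z (fst q) - snd q) / (2 * weighted_inner lam 1 s z z))))
     (at (z, c))"
proof (rule has_derivative_inverse_basic[where f="\<lambda>p. (fst p, flow_norm_sq lam (fst p) (snd p))"
      and T="{p. fst p \<noteq> 0 \<and> snd p > 0}"])
  have D: "weighted_inner lam 1 s z z > 0" by (rule weighted_inner_self_pos[OF lam z])
  have "((\<lambda>p. (fst p, flow_norm_sq lam (fst p) (snd p))) has_derivative
      (\<lambda>q. (fst q, 2 * weighted_inner lam 0 s z (fst q) - 2 * snd q * weighted_inner lam 1 s z z)))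
      (at (z, s))"
    by (intro has_derivative_Pair has_derivative_fst has_derivative_ident flow_norm_sq_has_derivative)
  then show "((\<lambda>p. (fst p, flow_norm_sq lam (fst p) (snd p))) has_derivative
      (\<lambda>q. (fst q, 2 * weighted_inner lam 0 s z (fst q) - 2 * snd q * weighted_inner lam 1 s z z)))
      (at ((\<lambda>p. (fst p, flow_time lam (fst p) (snd p))) (z, c)))"
    by (simp add: s_def)
  have "linear (\<lambda>q. (fst q, (2 * weighted_inner lam 0 s z (fst q) - snd q) / (2 * weighted_inner lam 1 s z z)))"
    by (rule linearI) (use D in \<open>simp_all add: linear_add[OF linear_weighted_inner]
          linear_scale[OF linear_weighted_inner] field_simps\<close>)
  then show "bounded_linear (\<lambda>q. (fst q, (2 * weighted_inner lam 0 s z (fst q) - snd q) /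
      (2 * weighted_inner lam 1 s z z)))"
    by (simp add: linear_conv_bounded_linear)
  show "(\<lambda>q. (fst q, (2 * weighted_inner lam 0 s z (fst q) - snd q) / (2 * weighted_inner lam 1 s z z))) \<circ>
      (\<lambda>q. (fst q, 2 * weighted_inner lam 0 s z (fst q) - 2 * snd q * weighted_inner lam 1 s z z)) = id"
    using D by (auto simp: fun_eq_iff)
  show "continuous (at (z, c)) (\<lambda>p. (fst p, flow_time lam (fst p) (snd p)))"
    by (intro continuous_Pair continuous_fst continuous_ident continuous_flow_time[of lam, OF lam z c])
  show "open {p :: (complex ^ 'm) \<times> real. fst p \<noteq> 0 \<and> snd p > 0}" by (rule open_nonzero_times_pos)
  show "(z, c) \<in> {p. fst p \<noteq> 0 \<and> snd p > 0}" using z c by simp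
  show "\<And>p. p \<in> {p. fst p \<noteq> 0 \<and> snd p > 0} \<Longrightarrow>
      (fst ((fst p, flow_time lam (fst p) (snd p))),
       flow_norm_sq lam (fst ((fst p, flow_time lam (fst p) (snd p)))) (snd ((fst p, flow_time lam (fst p) (snd p))))) = p"
    using flow_norm_sq_flow_time[of lam, OF lam] by auto
qed

text \<open>\<open>log_radius lam z = ln (r_lambda lam z)\<close>, see \<open>r_lambda_eq_exp_log_radius\<close> below.\<close>
definition log_radius :: "('m::finite \<Rightarrow> real) \<Rightarrow> complex ^ 'm \<Rightarrow> real" where
  "log_radius lam z = flow_time lam z 1"

lemma log_radius_has_derivative:
  fixes x :: "complex ^ 'm::finite"
  assumes lam: "\<And>a. lam a > 0" and x: "x \<noteq> 0"
  shows "(log_radius lam has_derivative (\<lambda>v. weighted_inner lam 0 (log_radius lam x) x v /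
      weighted_inner lam 1 (log_radius lam x) x x)) (at x)"
proof -
  have "((\<lambda>z::complex ^ 'm. (z, 1::real)) has_derivative (\<lambda>h. (h, 0))) (at x)"
    by (intro has_derivative_Pair has_derivative_ident has_derivative_const)
  from has_derivative_snd[OF has_derivative_compose[OF this flow_time_has_derivative[of lam, OF lam x]]]
  show ?thesis
    unfolding log_radius_def[abs_def] by simp
qed

lemma smooth_on_inner_component:
  "open U \<Longrightarrow> smooth_on U (\<lambda>x::complex ^ 'm. inner (x $ a) u)"
  by (rule smooth_on_bounded_linear)
     (auto intro: bounded_linear_compose[OF bounded_linear_inner_left bounded_linear_vec_nth])

lemma smooth_on_inner_component_self:
  "open U \<Longrightarrow> smooth_on U (\<lambda>x::complex ^ 'm. inner (x $ a) (x $ a))"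
proof -
  assume U: "open U"
  have "smooth_on U (\<lambda>x::complex ^ 'm. Re (x $ a))" "smooth_on U (\<lambda>x::complex ^ 'm. Im (x $ a))"
    by (intro smooth_on_bounded_linear[OF _ U] bounded_linear_compose[OF _ bounded_linear_vec_nth]
        bounded_linear_Re bounded_linear_Im)+
  then have "smooth_on U (\<lambda>x::complex ^ 'm. Re (x $ a) * Re (x $ a) + Im (x $ a) * Im (x $ a))"
    by (intro smooth_on_add smooth_on_mult U)
  then show ?thesis by (simp add: inner_complex_def)
qed

text \<open>The derivatives of \<^const>\<open>log_radius\<close> are polynomials in \<^const>\<open>log_radius\<close> itself, in the
  exponentials \<open>exp (\<mu> * log_radius lam z)\<close> and in the inverse of the (positive) denominator of its
  gradient, all with smooth coefficients; this family is closed under differentiation.\<close>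
lemma smooth_on_log_radius:
  fixes lam :: "'m::finite \<Rightarrow> real"
  assumes lam: "\<And>a. lam a > 0"
  shows "smooth_on (UNIV - {0}) (log_radius lam)"
proof -
  let ?W = "UNIV - {0::complex ^ 'm}"
  have W: "open ?W" by auto
  define E where "E = {h. \<exists>\<mu>. h = (\<lambda>z. exp (\<mu> * log_radius lam z))}"
  define S where "S = {g. smooth_on ?W g}"
  define D where "D z = weighted_inner lam 1 (log_radius lam z) z z" for z
  define B where "B = insert (log_radius lam) (insert (\<lambda>z. inverse (D z)) (E \<union> S))"
  have sub: "E \<union> S \<subseteq> B" by (auto simp: B_def)
  have D_pos: "D z > 0" if "z \<in> ?W" for z
    using weighted_inner_self_pos[of lam, OF lam] that by (simp add: D_def)
  have E_in: "(\<lambda>z. exp (\<mu> * log_radius lam z)) \<in> poly_closure (E \<union> S)" for \<mu>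
    by (rule poly_closure.base) (auto simp: E_def)
  have S_in: "g \<in> poly_closure (E \<union> S)" if "smooth_on ?W g" for g
    by (rule poly_closure.base) (use that in \<open>simp add: S_def\<close>)
  have W_in: "(\<lambda>x. weighted_inner lam k (log_radius lam x) x (u x)) \<in> poly_closure (E \<union> S)"
    if u: "\<And>a. smooth_on ?W (\<lambda>x. inner (x $ a) (u x $ a))" for k u
    unfolding weighted_inner_def
    by (intro poly_closure_sum poly_closure.mult poly_closure.const E_in S_in u) simp
  have grad_in: "(\<lambda>x. weighted_inner lam 0 (log_radius lam x) x v * inverse (D x)) \<in> poly_closure B" for v
  proof (rule poly_closure.mult)
    show "(\<lambda>x. weighted_inner lam 0 (log_radius lam x) x v) \<in> poly_closure B"
      by (rule poly_closure_mono[OF sub W_in]) (simp add: smooth_on_inner_component W)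
    show "(\<lambda>x. inverse (D x)) \<in> poly_closure B" by (simp add: B_def poly_closure.base)
  qed
  have lr: "(log_radius lam has_derivative
      (\<lambda>v. weighted_inner lam 0 (log_radius lam x) x v * inverse (D x))) (at x)" if "x \<in> ?W" for x
    using log_radius_has_derivative[of lam, OF lam, of x] that by (simp add: D_def divide_inverse)
  have dlr: "derivatives_in ?W B (log_radius lam)"
    using lr grad_in by (rule derivatives_inI)
  have dE: "derivatives_in ?W B b" if "b \<in> E" for b
  proof -
    from that have "\<exists>\<mu>. b = (\<lambda>z. exp (\<mu> * log_radius lam z))" by (simp add: E_def)
    then obtain \<mu> where b: "b = (\<lambda>z. exp (\<mu> * log_radius lam z))" ..
    have "{log_radius lam} \<subseteq> B" by (simp add: B_def)
    from derivatives_in_poly_closure[OF W this _ poly_closure_cmult[OF poly_closure.base]] dlr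
    have "derivatives_in ?W B (\<lambda>z. \<mu> * log_radius lam z)" by blast
    moreover have "(\<lambda>z. exp (\<mu> * log_radius lam z)) \<in> B" unfolding B_def E_def by blast
    ultimately show ?thesis unfolding b by (rule derivatives_in_exp[OF W])
  qed
  have dS: "derivatives_in ?W B b" if "b \<in> S" for b
    using that by (intro derivatives_in_smooth) (unfold S_def B_def, blast+)
  have dD: "derivatives_in ?W B D"
  proof (rule derivatives_in_poly_closure[OF W sub])
    show "derivatives_in ?W B b" if "b \<in> E \<union> S" for b using that dE dS by blast
    show "D \<in> poly_closure (E \<union> S)"
      unfolding D_def by (intro W_in smooth_on_inner_component_self W)
  qed
  have "D z \<noteq> 0" if "z \<in> ?W" for z using D_pos[OF that] by simp
  moreover have "(\<lambda>z. inverse (D z)) \<in> B" by (simp add: B_def)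
  ultimately have dI: "derivatives_in ?W B (\<lambda>z. inverse (D z))"
    by (rule derivatives_in_inverse[OF W dD])
  show ?thesis
  proof (rule smooth_on_poly_closure[OF W])
    fix b assume "b \<in> B"
    then consider "b = log_radius lam" | "b = (\<lambda>z. inverse (D z))" | "b \<in> E" | "b \<in> S"
      unfolding B_def by blast
    then show "derivatives_in ?W B b"
      by cases (simp_all add: dlr dI dE dS)
  qed (simp add: B_def poly_closure.base)
qed

lemma hess_log_radius:
  fixes x v :: "complex ^ 'm::finite"
  assumes lam: "\<And>a. lam a > 0" and x: "x \<noteq> 0"
  defines "s \<equiv> log_radius lam x"
  defines "D \<equiv> weighted_inner lam 1 s x x"
  defines "d \<equiv> weighted_inner lam 0 s x v / D"
  shows "hess (log_radius lam) x v v =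
    (weighted_inner lam 0 s v v - 4 * d * weighted_inner lam 1 s x v + 2 * d\<^sup>2 * weighted_inner lam 2 s x x) / D"
proof -
  have V: "open (UNIV - {0::complex ^ 'm})" "x \<in> UNIV - {0}" using x by auto
  have D: "D > 0" unfolding D_def by (rule weighted_inner_self_pos[of lam, OF lam x])
  have lr: "(log_radius lam has_derivative (\<lambda>w. weighted_inner lam 0 s x w / D)) (at x)"
    unfolding s_def D_def by (rule log_radius_has_derivative[of lam, OF lam x])
  have num: "((\<lambda>y. weighted_inner lam 0 (log_radius lam y) y v) has_derivative
      (\<lambda>w. weighted_inner lam 0 s w v - 2 * (weighted_inner lam 0 s x w / D) * weighted_inner lam 1 s x v)) (at x)"
    by (rule has_derivative_eq_rhs[OF weighted_inner_has_derivative[OF lr has_derivative_ident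
          has_derivative_const]]) (simp add: fun_eq_iff s_def weighted_inner_def)
  have den: "((\<lambda>y. weighted_inner lam 1 (log_radius lam y) y y) has_derivative
      (\<lambda>w. 2 * weighted_inner lam 1 s x w - 2 * (weighted_inner lam 0 s x w / D) * weighted_inner lam 2 s x x))
      (at x)"
    by (rule has_derivative_eq_rhs[OF weighted_inner_has_derivative[OF lr has_derivative_ident
          has_derivative_ident]]) (simp add: fun_eq_iff s_def numeral_2_eq_2 weighted_inner_commute[of lam "Suc 0" _ _ x])
  have "hess (log_radius lam) x v = (\<lambda>w.
      - weighted_inner lam 0 s x v * (inverse D * (2 * weighted_inner lam 1 s x w
        - 2 * (weighted_inner lam 0 s x w / D) * weighted_inner lam 2 s x x) * inverse D)
      + (weighted_inner lam 0 s w v - 2 * (weighted_inner lam 0 s x w / D) * weighted_inner lam 1 s x v) / D)"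
  proof (rule hess_eqI[OF V])
    show "(log_radius lam has_derivative (\<lambda>v. weighted_inner lam 0 (log_radius lam y) y v /
        weighted_inner lam 1 (log_radius lam y) y y)) (at y)" if "y \<in> UNIV - {0}" for y
      using log_radius_has_derivative[of lam, OF lam] that by auto
    show "((\<lambda>y. weighted_inner lam 0 (log_radius lam y) y v / weighted_inner lam 1 (log_radius lam y) y y)
        has_derivative (\<lambda>w.
      - weighted_inner lam 0 s x v * (inverse D * (2 * weighted_inner lam 1 s x w
        - 2 * (weighted_inner lam 0 s x w / D) * weighted_inner lam 2 s x x) * inverse D)
      + (weighted_inner lam 0 s w v - 2 * (weighted_inner lam 0 s x w / D) * weighted_inner lam 1 s x v) / D))
        (at x)"
      using has_derivative_divide[OF num den] D by (simp add: s_def D_def)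
  qed
  then show ?thesis
    using D by (simp add: d_def field_simps power2_eq_square weighted_inner_commute[of lam 0 s v x])
qed

lemma weighted_bessel:
  assumes lam: "\<And>a. lam a > 0"
  shows "(weighted_inner lam 1 s x v)\<^sup>2 + (weighted_inner lam 1 s x (Jc v))\<^sup>2 \<le>
    weighted_inner lam 2 s x x * weighted_inner lam 0 s v v"
proof -
  define al where "al a = exp (- 2 * lam a * s)" for a
  have al: "sqrt (al a) * sqrt (al a) = al a" for a by (simp add: al_def)
  have ala: "\<bar>al a\<bar> = al a" for a by (simp add: al_def)
  define Z where "Z = (\<chi> a. (lam a * sqrt (al a)) *\<^sub>R (x $ a))"
  define W where "W = (\<chi> a. sqrt (al a) *\<^sub>R (v $ a))"
  have "(inner Z W)\<^sup>2 + (inner Z (Jc W))\<^sup>2 \<le> inner Z Z * inner W W"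
    by (rule bessel_two_orthogonal) (simp_all add: inner_Jc_same inner_Jc_Jc)
  moreover have "inner Z W = weighted_inner lam 1 s x v"
    unfolding weighted_inner_def inner_vec_def Z_def W_def
    by (rule sum.cong) (simp_all add: al_def[symmetric] algebra_simps ala, simp add: al_def)
  moreover have "inner Z (Jc W) = weighted_inner lam 1 s x (Jc v)"
    unfolding weighted_inner_def inner_vec_def Z_def W_def Jc_def
    by (rule sum.cong) (simp_all add: al_def[symmetric] scaleR_conv_of_real algebra_simps
        inner_complex_def ala, (simp add: al_def algebra_simps)?)
  moreover have "inner Z Z = weighted_inner lam 2 s x x"
    unfolding weighted_inner_def inner_vec_def Z_def
    by (rule sum.cong) (simp_all add: al_def[symmetric] power2_eq_square algebra_simps ala,
        (simp add: al_def algebra_simps)?)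
  moreover have "inner W W = weighted_inner lam 0 s v v"
    unfolding weighted_inner_def inner_vec_def W_def
    by (rule sum.cong) (simp_all add: al_def[symmetric] algebra_simps ala, (simp add: al_def algebra_simps)?)
  ultimately show ?thesis by simp
qed

text \<open>With \<open>T = t\<^sub>1\<^sup>2 + t\<^sub>2\<^sup>2\<close> and \<open>X = t\<^sub>1 P\<^sub>1 + t\<^sub>2 P\<^sub>2\<close> the expression is \<open>(4/D)(D T + S + E T - 2 X)\<close>,
  and \<open>2 X \<le> E T + S\<close> by Cauchy-Schwarz and AM-GM.\<close>
lemma levi_form_exp_log_radius_ineq:
  fixes D E S P1 P2 t1 t2 :: real
  assumes D: "D > 0" and E: "E \<ge> 0" and S: "S > 0" and P: "P1\<^sup>2 + P2\<^sup>2 \<le> E * S"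
  shows "0 < 4 * t1\<^sup>2 + 2 * ((S - 4 * t1 * P1 + 2 * t1\<^sup>2 * E) / D)
           + 4 * t2\<^sup>2 + 2 * ((S - 4 * t2 * P2 + 2 * t2\<^sup>2 * E) / D)"
proof -
  define T X where "T = t1\<^sup>2 + t2\<^sup>2" and "X = t1 * P1 + t2 * P2"
  have T: "T \<ge> 0" by (simp add: T_def)
  have "T * (P1\<^sup>2 + P2\<^sup>2) - X\<^sup>2 = (t1 * P2 - t2 * P1)\<^sup>2"
    by (simp add: T_def X_def power2_eq_square algebra_simps)
  then have "X\<^sup>2 \<le> T * (P1\<^sup>2 + P2\<^sup>2)" by (metis diff_ge_0_iff_ge zero_le_power2)
  then have XTES: "X\<^sup>2 \<le> T * (E * S)" using mult_left_mono[OF P T] by linarith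
  have "(E * T + S)\<^sup>2 - 4 * (T * (E * S)) = (E * T - S)\<^sup>2" by (simp add: power2_eq_square algebra_simps)
  then have "4 * (T * (E * S)) \<le> (E * T + S)\<^sup>2" by (metis diff_ge_0_iff_ge zero_le_power2)
  then have "(2 * X)\<^sup>2 \<le> (E * T + S)\<^sup>2" using XTES by (simp add: power_mult_distrib)
  moreover have "0 \<le> E * T + S" using E T S by simp
  ultimately have X: "2 * X \<le> E * T + S" by (rule power2_le_imp_le)
  have "0 < D * T + (S + E * T - 2 * X)"
  proof (cases "T = 0")
    case True
    then have "t1 = 0" "t2 = 0" by (auto simp: T_def add_nonneg_eq_0_iff)
    then show ?thesis using S True by (simp add: X_def)
  next
    case False
    then have "D * T > 0" using D T by simp
    then show ?thesis using X by linarith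
  qed
  moreover have "4 * t1\<^sup>2 + 2 * ((S - 4 * t1 * P1 + 2 * t1\<^sup>2 * E) / D)
      + 4 * t2\<^sup>2 + 2 * ((S - 4 * t2 * P2 + 2 * t2\<^sup>2 * E) / D) = (4 / D) * (D * T + (S + E * T - 2 * X))"
    using D by (simp add: T_def X_def field_simps)
  ultimately show ?thesis using D by simp
qed

lemma smooth_on_exp_2x: "smooth_on UNIV (\<lambda>y::real. exp (2 * y))"
  using smooth_on_compose[OF _ _ smooth_on_exp smooth_on_affine[of 2 0]] by simp

lemma levi_form_exp_log_radius_pos:
  fixes x v :: "complex ^ 'm::finite"
  assumes lam: "\<And>a. lam a > 0" and x: "x \<noteq> 0" and v: "v \<noteq> 0"
  shows "levi_form (\<lambda>z. exp (2 * log_radius lam z)) x v > 0"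
proof -
  define s where "s = log_radius lam x"
  define D where "D = weighted_inner lam 1 s x x"
  have V: "open (UNIV - {0::complex ^ 'm})" "x \<in> UNIV - {0}" using x by auto
  have deriv1: "deriv (\<lambda>y::real. exp (2 * y)) = (\<lambda>y. 2 * exp (2 * y))"
    by (intro ext DERIV_imp_deriv) (auto intro!: derivative_eq_intros)
  have deriv2: "deriv (\<lambda>y::real. 2 * exp (2 * y)) = (\<lambda>y. 4 * exp (2 * y))"
    by (intro ext DERIV_imp_deriv) (auto intro!: derivative_eq_intros)
  have grad: "frechet_derivative (log_radius lam) (at x) u = weighted_inner lam 0 s x u / D" for u
    unfolding s_def D_def
    by (rule fun_cong[OF frechet_derivative_at[OF log_radius_has_derivative[of lam, OF lam x]], symmetric])
  have hess: "hess (\<lambda>z. exp (2 * log_radius lam z)) x u u =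
      exp (2 * s) * (4 * (weighted_inner lam 0 s x u / D)\<^sup>2 + 2 * hess (log_radius lam) x u u)" for u
    using hess_compose[OF V smooth_on_log_radius[of lam, OF lam] smooth_on_exp_2x, of u u,
        unfolded deriv1 deriv2]
    by (simp add: grad s_def power2_eq_square algebra_simps)
  have "0 < 4 * (weighted_inner lam 0 s x v / D)\<^sup>2 + 2 * ((weighted_inner lam 0 s v v
        - 4 * (weighted_inner lam 0 s x v / D) * weighted_inner lam 1 s x v
        + 2 * (weighted_inner lam 0 s x v / D)\<^sup>2 * weighted_inner lam 2 s x x) / D)
      + 4 * (weighted_inner lam 0 s x (Jc v) / D)\<^sup>2 + 2 * ((weighted_inner lam 0 s v v
        - 4 * (weighted_inner lam 0 s x (Jc v) / D) * weighted_inner lam 1 s x (Jc v)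
        + 2 * (weighted_inner lam 0 s x (Jc v) / D)\<^sup>2 * weighted_inner lam 2 s x x) / D)"
    unfolding D_def
    by (rule levi_form_exp_log_radius_ineq[OF weighted_inner_self_pos[of lam, OF lam x]
          weighted_inner_self_nonneg[of lam, OF lam] weighted_inner_self_pos[of lam, OF lam v]
          weighted_bessel[of lam, OF lam]])
  moreover have "levi_form (\<lambda>z. exp (2 * log_radius lam z)) x v = exp (2 * s) * (4 * (weighted_inner lam 0 s x v / D)\<^sup>2 + 2 * ((weighted_inner lam 0 s v v
        - 4 * (weighted_inner lam 0 s x v / D) * weighted_inner lam 1 s x v
        + 2 * (weighted_inner lam 0 s x v / D)\<^sup>2 * weighted_inner lam 2 s x x) / D)
      + 4 * (weighted_inner lam 0 s x (Jc v) / D)\<^sup>2 + 2 * ((weighted_inner lam 0 s v v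
        - 4 * (weighted_inner lam 0 s x (Jc v) / D) * weighted_inner lam 1 s x (Jc v)
        + 2 * (weighted_inner lam 0 s x (Jc v) / D)\<^sup>2 * weighted_inner lam 2 s x x) / D))"
    unfolding levi_form_def hess hess_log_radius[of lam, OF lam x] weighted_inner_Jc_Jc
      s_def[symmetric] D_def[symmetric]
    by (simp add: algebra_simps)
  ultimately show ?thesis by simp
qed

lemma lflow_add: "lflow lam a (lflow lam b z) = lflow lam (a + b) z"
  by (simp add: lflow_def vec_eq_iff algebra_simps exp_add)

lemma lflow_0: "lflow lam 0 z = z"
  by (simp add: lflow_def vec_eq_iff)

lemma lflow_eq_0_iff: "lflow lam s z = 0 \<longleftrightarrow> z = 0"
  by (auto simp: lflow_def vec_eq_iff)

lemma log_radius_lflow: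
  assumes "\<And>a. lam a > 0" "z \<noteq> 0"
  shows "log_radius lam (lflow lam s z) = log_radius lam z + s"
  unfolding log_radius_def using assms
  by (intro flow_time_unique) (simp_all add: flow_norm_sq_lflow flow_norm_sq_flow_time lflow_eq_0_iff)

lemma log_radius_sphere:
  assumes "\<And>a. lam a > 0" "norm z = 1"
  shows "log_radius lam z = 0"
  unfolding log_radius_def using assms
  by (intro flow_time_unique) (auto simp: flow_norm_sq_0 dot_square_norm)

lemma r_lambda_eq_exp_log_radius:
  fixes lam :: "'m::finite \<Rightarrow> real"
  assumes lam: "\<And>a. lam a > 0" and z: "z \<noteq> 0"
  shows "r_lambda lam z = exp (log_radius lam z)"
proof -
  define r0 where "r0 z = (if z = 0 then 0 else exp (log_radius lam z))" for z :: "complex ^ 'm"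
  have uniq: "r = r0" if r: "r 0 = 0 \<and> (\<forall>z. z \<noteq> 0 \<longrightarrow> r z > 0) \<and> (\<forall>z. norm z = 1 \<longrightarrow> r z = 1) \<and>
      (\<forall>s z. z \<noteq> 0 \<longrightarrow> r (lflow lam s z) = exp s * r z)" for r
  proof
    fix z :: "complex ^ 'm"
    show "r z = r0 z"
    proof (cases "z = 0")
      case False
      define w where "w = lflow lam (- log_radius lam z) z"
      have "w \<noteq> 0" using False by (simp add: w_def lflow_eq_0_iff)
      have "inner w w = flow_norm_sq lam w 0" by (simp add: flow_norm_sq_0)
      also have "\<dots> = flow_norm_sq lam z (log_radius lam z)" by (simp add: w_def flow_norm_sq_lflow)
      also have "\<dots> = 1"
        unfolding log_radius_def by (rule flow_norm_sq_flow_time[of lam, OF lam False]) simp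
      finally have "inner w w = 1" .
      then have "r w = 1" using r by (simp add: norm_eq_sqrt_inner)
      moreover have "z = lflow lam (log_radius lam z) w" by (simp add: w_def lflow_add lflow_0)
      ultimately show ?thesis using r \<open>w \<noteq> 0\<close> False by (metis mult.right_neutral r0_def)
    qed (use r in \<open>simp add: r0_def\<close>)
  qed
  moreover have r0: "r0 0 = 0 \<and> (\<forall>z. z \<noteq> 0 \<longrightarrow> r0 z > 0) \<and> (\<forall>z. norm z = 1 \<longrightarrow> r0 z = 1) \<and>
      (\<forall>s z. z \<noteq> 0 \<longrightarrow> r0 (lflow lam s z) = exp s * r0 z)"
    using log_radius_sphere[of lam, OF lam] log_radius_lflow[of lam, OF lam]
    by (auto simp: r0_def exp_add lflow_eq_0_iff)
  have "r_lambda lam = r0"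
    unfolding r_lambda_def by (rule the_equality) (fact r0, erule uniq)
  then show ?thesis using z by (simp add: r0_def)
qed

lemma smooth_on_r_lambda_sq:
  assumes "\<And>a. lam a > 0"
  shows "smooth_on (UNIV - {0}) (\<lambda>z. (r_lambda lam z)\<^sup>2)"
proof (rule smooth_on_cong)
  show "smooth_on (UNIV - {0}) (\<lambda>z. exp (2 * log_radius lam z))"
    by (rule smooth_on_compose[OF _ _ smooth_on_exp_2x smooth_on_log_radius[of lam, OF assms]]) auto
  show "(r_lambda lam z)\<^sup>2 = exp (2 * log_radius lam z)" if "z \<in> UNIV - {0}" for z
    using r_lambda_eq_exp_log_radius[of lam, OF assms, of z] that
    by (simp add: power2_eq_square exp_add[symmetric])
qed auto

lemma strictly_psh_on_r_lambda_sq: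
  assumes "\<And>a. lam a > 0"
  shows "strictly_psh_on (UNIV - {0}) (\<lambda>z. (r_lambda lam z)\<^sup>2)"
  unfolding strictly_psh_on_iff_levi_form
proof (intro ballI allI impI)
  fix x v :: "complex ^ 'a" assume x: "x \<in> UNIV - {0}" and v: "v \<noteq> 0"
  have "levi_form (\<lambda>z. (r_lambda lam z)\<^sup>2) x v = levi_form (\<lambda>z. exp (2 * log_radius lam z)) x v"
    by (rule levi_form_eq_on_open[of "UNIV - {0}"])
       (use x r_lambda_eq_exp_log_radius[of lam, OF assms] in \<open>auto simp: power2_eq_square exp_add[symmetric]\<close>)
  then show "levi_form (\<lambda>z. (r_lambda lam z)\<^sup>2) x v > 0"
    using levi_form_exp_log_radius_pos[of lam, OF assms _ v] x by simp
qed

lemma r_lambda_sq_le_1: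
  assumes "\<And>a. lam a > 0" "z \<noteq> 0" "norm z \<le> 1"
  shows "(r_lambda lam z)\<^sup>2 \<le> 1"
proof -
  have "(norm z)\<^sup>2 \<le> 1" using power_le_one[OF norm_ge_zero assms(3)] .
  then have "\<not> 1 < flow_norm_sq lam z 0" by (simp add: flow_norm_sq_0 dot_square_norm)
  then have "log_radius lam z \<le> 0"
    using flow_time_greater_iff[of lam, OF assms(1,2), of 1 0] by (simp add: log_radius_def)
  then show ?thesis
    using r_lambda_eq_exp_log_radius[of lam, OF assms(1,2)] by (simp add: power_le_one)
qed

section \<open>Cut-off functions, regularised maximum and gluing\<close>

lemma smooth_cutoff:
  fixes \<rho> :: real
  assumes "\<rho> > 0"
  obtains chi :: "'a::euclidean_space \<Rightarrow> real"
  where "smooth_on UNIV chi" "\<And>z. norm z \<le> \<rho> / 2 \<Longrightarrow> chi z = 1" "\<And>z. \<rho> \<le> norm z \<Longrightarrow> chi z = 0"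
proof
  let ?chi = "\<lambda>z::'a. smooth_step ((4 / (3 * \<rho>\<^sup>2)) * (\<rho>\<^sup>2 + (-1) * inner z z))"
  have "smooth_on UNIV (\<lambda>z::'a. (4 / (3 * \<rho>\<^sup>2)) * (\<rho>\<^sup>2 + (-1) * inner z z))"
    by (intro smooth_on_cmult smooth_on_add smooth_on_const smooth_on_inner_self) simp_all
  from smooth_on_compose[OF _ _ smooth_on_smooth_step this] show "smooth_on UNIV ?chi" by simp
  show "?chi z = 1" if "norm z \<le> \<rho> / 2" for z
  proof -
    have "(norm z)\<^sup>2 \<le> (\<rho> / 2)\<^sup>2" by (rule power_mono) (use that in simp_all)
    then have "1 \<le> (4 / (3 * \<rho>\<^sup>2)) * (\<rho>\<^sup>2 + (-1) * inner z z)"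
      using assms by (simp add: dot_square_norm power_divide field_simps)
    then show ?thesis by (rule smooth_step_eq_1)
  qed
  show "?chi z = 0" if "\<rho> \<le> norm z" for z
  proof -
    have "\<rho>\<^sup>2 \<le> (norm z)\<^sup>2" by (rule power_mono) (use that assms in simp_all)
    then have "(4 / (3 * \<rho>\<^sup>2)) * (\<rho>\<^sup>2 + (-1) * inner z z) \<le> 0"
      using assms by (intro mult_nonneg_nonpos) (simp_all add: dot_square_norm)
    then show ?thesis by (rule smooth_step_eq_0)
  qed
qed

text \<open>Strict plurisubharmonicity survives this smoothed maximum because \<^const>\<open>smooth_ramp\<close> is
  convex with slope in \<open>[0, 1]\<close>.\<close>
definition smooth_max :: "real \<Rightarrow> ('a \<Rightarrow> real) \<Rightarrow> ('a \<Rightarrow> real) \<Rightarrow> 'a \<Rightarrow> real" where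
  "smooth_max w f g z = g z + w * smooth_ramp ((f z - g z) / w)"

lemma smooth_max_eq_left: "w > 0 \<Longrightarrow> w \<le> f z - g z \<Longrightarrow> smooth_max w f g z = f z"
  by (simp add: smooth_max_def smooth_ramp_eq_id)

lemma smooth_max_eq_right: "w > 0 \<Longrightarrow> f z - g z \<le> - w \<Longrightarrow> smooth_max w f g z = g z"
  by (simp add: smooth_max_def smooth_ramp_eq_0 divide_le_eq)

lemma smooth_max_eq: "w \<noteq> 0 \<Longrightarrow> smooth_max w f g = (\<lambda>z. g z + w * smooth_ramp ((1 / w) * f z + (- 1 / w) * g z))"
  by (simp add: smooth_max_def fun_eq_iff diff_divide_distrib)

lemma smooth_on_smooth_max:
  assumes "open V" "w \<noteq> 0" "smooth_on V f" "smooth_on V g"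
  shows "smooth_on V (smooth_max w f g)"
  unfolding smooth_max_eq[OF assms(2)]
  by (intro smooth_on_add smooth_on_cmult smooth_on_compose[OF _ _ smooth_on_smooth_ramp] assms) auto

lemma strictly_psh_on_smooth_max:
  fixes f g :: "complex ^ 'm \<Rightarrow> real"
  assumes V: "open V" and w: "w > 0" and f: "smooth_on V f" "strictly_psh_on V f"
    and g: "smooth_on V g" "strictly_psh_on V g"
  shows "strictly_psh_on V (smooth_max w f g)"
  unfolding strictly_psh_on_iff_levi_form
proof (intro ballI allI impI)
  fix x v :: "complex ^ 'm" assume x: "x \<in> V" and v: "v \<noteq> 0"
  let ?h = "\<lambda>y. (1 / w) * f y + (- 1 / w) * g y"
  have sh: "smooth_on V ?h" using f g by (intro smooth_on_add smooth_on_cmult V)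
  have sr: "smooth_on V (\<lambda>y. smooth_ramp (?h y))"
    by (rule smooth_on_compose[OF _ V smooth_on_smooth_ramp sh]) auto
  define d1 d2 where "d1 = deriv smooth_ramp (?h x)" and "d2 = deriv (deriv smooth_ramp) (?h x)"
  have d: "0 \<le> d1" "d1 \<le> 1" "0 \<le> d2"
    using deriv_smooth_ramp_bounds deriv2_smooth_ramp_nonneg by (auto simp: d1_def d2_def)
  have hh: "hess ?h x u u = (1 / w) * hess f x u u + (- 1 / w) * hess g x u u" for u
  proof -
    have "hess ?h x u u = hess (\<lambda>y. (1 / w) * f y) x u u + hess (\<lambda>y. (- 1 / w) * g y) x u u"
      by (rule hess_add[OF V x smooth_on_cmult[OF V f(1)] smooth_on_cmult[OF V g(1)]])
    then show ?thesis by (simp only: hess_cmult[OF V x f(1)] hess_cmult[OF V x g(1)])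
  qed
  define Q where "Q = (frechet_derivative ?h (at x) v)\<^sup>2 + (frechet_derivative ?h (at x) (Jc v))\<^sup>2"
  have "levi_form (\<lambda>y. smooth_ramp (?h y)) x v =
      d2 * Q + d1 * ((1 / w) * levi_form f x v + (- 1 / w) * levi_form g x v)"
    unfolding levi_form_def hess_compose[OF V x sh smooth_on_smooth_ramp] hh d1_def[symmetric]
      d2_def[symmetric] Q_def
    by (simp add: power2_eq_square algebra_simps)
  moreover have "levi_form (smooth_max w f g) x v = levi_form g x v + w * levi_form (\<lambda>y. smooth_ramp (?h y)) x v"
    unfolding smooth_max_eq[OF less_imp_neq[OF w, symmetric]]
    using levi_form_add[OF V x g(1) smooth_on_cmult[OF V sr]] levi_form_cmult[OF V x sr] by simp
  ultimately have "levi_form (smooth_max w f g) x v =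
      levi_form g x v + w * (d2 * Q + d1 * ((1 / w) * levi_form f x v + (- 1 / w) * levi_form g x v))"
    by simp
  also have "\<dots> = (1 - d1) * levi_form g x v + d1 * levi_form f x v + w * d2 * Q"
    using w by (simp add: field_simps)
  finally have levi: "levi_form (smooth_max w f g) x v = (1 - d1) * levi_form g x v + d1 * levi_form f x v + w * d2 * Q" .
  define m where "m = min (levi_form f x v) (levi_form g x v)"
  have "0 < m"
    using f(2) g(2) x v by (auto simp: strictly_psh_on_iff_levi_form m_def)
  moreover have "(1 - d1) * m \<le> (1 - d1) * levi_form g x v" "d1 * m \<le> d1 * levi_form f x v"
    using d by (simp_all add: mult_left_mono m_def)
  moreover have "0 \<le> w * d2 * Q" using w d by (simp add: Q_def)
  ultimately show "levi_form (smooth_max w f g) x v > 0"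
    unfolding levi by (simp add: algebra_simps; linarith)
qed

lemma smooth_on_glue:
  assumes "open V1" "open V2" "smooth_on V1 f1" "smooth_on V2 f2"
    and "\<And>z. z \<in> V1 \<Longrightarrow> q z = f1 z" "\<And>z. z \<in> V2 \<Longrightarrow> q z = f2 z"
  shows "smooth_on (V1 \<union> V2) q"
  using assms by (intro smooth_on_local) blast+

lemma strictly_psh_on_glue:
  assumes "open V1" "open V2" "strictly_psh_on V1 f1" "strictly_psh_on V2 f2"
    and "\<And>z. z \<in> V1 \<Longrightarrow> q z = f1 z" "\<And>z. z \<in> V2 \<Longrightarrow> q z = f2 z"
  shows "strictly_psh_on (V1 \<union> V2) q"
  unfolding strictly_psh_on_iff_levi_form
proof (intro ballI allI impI)
  fix x v assume "x \<in> V1 \<union> V2" "v \<noteq> (0::complex ^ 'a)"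
  then show "levi_form q x v > 0"
    using assms levi_form_eq_on_open[of V1 x q f1 v] levi_form_eq_on_open[of V2 x q f2 v]
    by (auto simp: strictly_psh_on_iff_levi_form)
qed

lemma strictly_psh_on_cmult:
  assumes "open U" "smooth_on U f" "strictly_psh_on U f" "c > 0"
  shows "strictly_psh_on U (\<lambda>z. c * f z)"
  using assms levi_form_cmult[OF assms(1) _ assms(2)]
  by (simp add: strictly_psh_on_iff_levi_form)

lemma glue_smooth_max:
  fixes \<phi> R :: "complex ^ 'm \<Rightarrow> real"
  assumes W: "open W" "0 \<notin> W" "ball 0 r2 - {0} \<subseteq> W" and r: "r0 \<le> r1" "r1 < r2" and w: "w > 0"
    and \<phi>: "smooth_on W \<phi>" "strictly_psh_on W \<phi>" and R: "smooth_on W R" "strictly_psh_on W R"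
    and above: "\<And>z. r1 < norm z \<Longrightarrow> norm z < r2 \<Longrightarrow> w \<le> \<phi> z - R z"
    and below: "\<And>z. 0 < norm z \<Longrightarrow> norm z < r0 \<Longrightarrow> \<phi> z - R z \<le> - w"
  obtains q where "smooth_on W q" "strictly_psh_on W q"
    "\<And>z. r2 \<le> norm z \<Longrightarrow> q z = \<phi> z" "\<And>z. 0 < norm z \<Longrightarrow> norm z < r0 \<Longrightarrow> q z = R z"
proof
  define q where "q z = (if norm z < r2 then smooth_max w \<phi> R z else \<phi> z)" for z
  define V1 V2 where "V1 = ball (0::complex ^ 'm) r2 - {0}" and "V2 = W - cball 0 r1"
  have V: "open V1" "open V2" "V1 \<subseteq> W" "V2 \<subseteq> W" "W = V1 \<union> V2"
    using W r by (auto simp: V1_def V2_def)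
  have q1: "q z = smooth_max w \<phi> R z" if "z \<in> V1" for z using that by (simp add: q_def V1_def)
  have q2: "q z = \<phi> z" if "z \<in> V2" for z
    using that above[of z] smooth_max_eq_left[OF w] by (auto simp: q_def V2_def)
  have "smooth_on V1 (smooth_max w \<phi> R)"
    by (intro smooth_on_smooth_max V(1) smooth_on_subset[OF \<phi>(1) V(3)] smooth_on_subset[OF R(1) V(3)])
       (use w in simp)
  then show "smooth_on W q"
    using smooth_on_glue[OF V(1,2) _ smooth_on_subset[OF \<phi>(1) V(4)] q1 q2] V(5) by simp
  have "strictly_psh_on V1 (smooth_max w \<phi> R)"
    by (intro strictly_psh_on_smooth_max V(1) w smooth_on_subset[OF \<phi>(1) V(3)] smooth_on_subset[OF R(1) V(3)]
        strictly_psh_on_subset[OF \<phi>(2) V(3)] strictly_psh_on_subset[OF R(2) V(3)])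
  then show "strictly_psh_on W q"
    using strictly_psh_on_glue[OF V(1,2) _ strictly_psh_on_subset[OF \<phi>(2) V(4)] q1 q2] V(5) by simp
  show "q z = \<phi> z" if "r2 \<le> norm z" for z using that by (simp add: q_def)
  show "q z = R z" if "0 < norm z" "norm z < r0" for z
    using that below[of z] smooth_max_eq_right[OF w] r by (simp add: q_def)
qed

section \<open>The logarithmic pole\<close>

lemma abs_le_norm_near_0:
  fixes p :: "'a::real_normed_vector \<Rightarrow> real"
  assumes dp: "(p has_derivative (\<lambda>v. 0)) (at 0)" and p0: "p 0 = 0"
  obtains \<eta> where "\<eta> > 0" "\<And>z. norm z \<le> \<eta> \<Longrightarrow> \<bar>p z\<bar> \<le> norm z"
proof -
  have "((\<lambda>h. \<bar>p h\<bar> / norm h) \<longlongrightarrow> 0) (at 0)"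
    using dp p0 by (simp add: has_derivative_at)
  then have "\<forall>\<^sub>F h in at 0. \<bar>p h\<bar> / norm h < 1" by (rule order_tendstoD) simp
  then obtain d where d: "d > 0" "\<And>h. h \<noteq> 0 \<Longrightarrow> dist h 0 < d \<Longrightarrow> \<bar>p h\<bar> / norm h < 1"
    unfolding eventually_at by blast
  have "\<bar>p z\<bar> \<le> norm z" if "norm z \<le> d / 2" for z
  proof (cases "z = 0")
    case False
    then have "\<bar>p z\<bar> / norm z < 1" using d that by auto
    then show ?thesis using False by (simp add: divide_less_eq)
  qed (simp add: p0)
  then show thesis using d(1) that[of "d / 2"] by simp
qed

lemma levi_form_cutoff_log_bounded_below:
  fixes chi :: "complex ^ 'm \<Rightarrow> real"
  assumes chi: "smooth_on UNIV chi" "\<And>z. norm z \<le> \<rho> / 2 \<Longrightarrow> chi z = 1" and \<rho>: "\<rho> > 0"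
  obtains K where "K \<ge> 0"
    "\<And>x v. x \<in> cball 0 \<rho> - {0} \<Longrightarrow> - K * (norm v)\<^sup>2 \<le> levi_form (\<lambda>z. chi z * log_norm_sq z) x v"
proof -
  have W: "open (UNIV - {0::complex ^ 'm})" by auto
  have "smooth_on (UNIV - {0}) (\<lambda>z. chi z * log_norm_sq z)"
    by (rule smooth_on_mult[OF W smooth_on_subset[OF chi(1)] smooth_on_log_norm_sq]) simp
  moreover have "compact (cball (0::complex ^ 'm) \<rho> - ball 0 (\<rho> / 2))" by (intro compact_diff) auto
  moreover have "cball (0::complex ^ 'm) \<rho> - ball 0 (\<rho> / 2) \<subseteq> UNIV - {0}" using \<rho> by auto
  ultimately obtain K where K: "K \<ge> 0" "\<And>x v. x \<in> cball 0 \<rho> - ball 0 (\<rho> / 2) \<Longrightarrow>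
      - K * (norm v)\<^sup>2 \<le> levi_form (\<lambda>z. chi z * log_norm_sq z) x v"
    using levi_form_bounded_below_on_compact[OF W] by blast
  have "- K * (norm v)\<^sup>2 \<le> levi_form (\<lambda>z. chi z * log_norm_sq z) x v" if x: "x \<in> cball 0 \<rho> - {0}" for x v
  proof (cases "norm x < \<rho> / 2")
    case True
    have "levi_form (\<lambda>z. chi z * log_norm_sq z) x v = levi_form log_norm_sq x v"
    proof (rule levi_form_eq_on_open)
      show "open (ball (0::complex ^ 'm) (\<rho> / 2) - {0})" by auto
      show "x \<in> ball 0 (\<rho> / 2) - {0}" using True x by simp
      show "chi y * log_norm_sq y = log_norm_sq y" if "y \<in> ball 0 (\<rho> / 2) - {0}" for y
        using that chi(2)[of y] by simp
    qed
    moreover have "0 \<le> K * (norm v)\<^sup>2" using K(1) by simp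
    ultimately show ?thesis using levi_form_log_norm_sq_nonneg[of x v] x by simp
  next
    case False
    then show ?thesis using K(2)[of x v] x by simp
  qed
  with K(1) show thesis by (rule that)
qed

text \<open>The weight \<open>2 e\<^sup>2 s\<close> makes the outer radius \<open>e\<^sup>2 s\<close> of the annulus \<open>e s < |z| \<le> e\<^sup>2 s\<close>, on
  which the logarithmic factor exceeds \<open>2\<close>, equal to half the weight.\<close>
definition log_pole :: "(complex ^ 'm \<Rightarrow> real) \<Rightarrow> (complex ^ 'm \<Rightarrow> real) \<Rightarrow> real \<Rightarrow> complex ^ 'm \<Rightarrow> real"
  where "log_pole p chi s z = p z + 2 * exp 2 * s * chi z * ln (inner z z / s\<^sup>2)"

lemma log_pole_eq:
  "z \<noteq> 0 \<Longrightarrow> s > 0 \<Longrightarrow> log_pole p chi s z =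
     p z + 2 * exp 2 * s * (chi z * log_norm_sq z) + (- 2 * exp 2 * s * ln (s\<^sup>2)) * chi z"
  by (simp add: log_pole_def log_norm_sq_def ln_div algebra_simps)

lemma smooth_on_log_pole:
  assumes "open U" "smooth_on U p" "smooth_on UNIV chi" "s > 0"
  shows "smooth_on (U - {0}) (log_pole p chi s)"
proof (rule smooth_on_cong)
  show "open (U - {0})" using assms(1) by auto
  show "smooth_on (U - {0}) (\<lambda>z. p z + 2 * exp 2 * s * (chi z * log_norm_sq z) + (- 2 * exp 2 * s * ln (s\<^sup>2)) * chi z)"
    using assms by (intro smooth_on_add smooth_on_cmult smooth_on_mult smooth_on_subset[OF assms(2)]
        smooth_on_subset[OF assms(3)] smooth_on_subset[OF smooth_on_log_norm_sq]) auto
qed (use assms(4) log_pole_eq in auto)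

lemma levi_form_log_pole:
  fixes p chi :: "complex ^ 'm \<Rightarrow> real"
  assumes U: "open U" and p: "smooth_on U p" and chi: "smooth_on UNIV chi" and s: "s > 0"
    and x: "x \<in> U - {0}"
  shows "levi_form (log_pole p chi s) x v = levi_form p x v
    + 2 * exp 2 * s * levi_form (\<lambda>z. chi z * log_norm_sq z) x v
    + (- 2 * exp 2 * s * ln (s\<^sup>2)) * levi_form chi x v"
proof -
  define A c where "A = 2 * exp 2 * s" and "c = - 2 * exp 2 * s * ln (s\<^sup>2)"
  let ?W = "U - {0}"
  have W: "open ?W" using U by auto
  have sm: "smooth_on ?W p" "smooth_on ?W (\<lambda>z. chi z * log_norm_sq z)" "smooth_on ?W chi"
    using smooth_on_subset[OF p, of ?W] smooth_on_subset[OF chi, of ?W]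
      smooth_on_subset[OF smooth_on_log_norm_sq, of ?W] smooth_on_mult[OF W]
    by auto
  have "levi_form (log_pole p chi s) x v =
      levi_form (\<lambda>z. p z + A * (chi z * log_norm_sq z) + c * chi z) x v"
    by (rule levi_form_eq_on_open[OF W x]) (use s in \<open>simp add: A_def c_def log_pole_eq\<close>)
  also have "\<dots> = levi_form (\<lambda>z. p z + A * (chi z * log_norm_sq z)) x v + levi_form (\<lambda>z. c * chi z) x v"
    by (rule levi_form_add[OF W x smooth_on_add[OF W sm(1) smooth_on_cmult[OF W sm(2)]]
          smooth_on_cmult[OF W sm(3)]])
  also have "\<dots> = levi_form p x v + A * levi_form (\<lambda>z. chi z * log_norm_sq z) x v + c * levi_form chi x v"
    by (simp only: levi_form_add[OF W x sm(1) smooth_on_cmult[OF W sm(2)]]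
        levi_form_cmult[OF W x sm(2)] levi_form_cmult[OF W x sm(3)])
  finally show ?thesis by (simp add: A_def c_def)
qed

lemma eventually_strictly_psh_on_log_pole:
  fixes p chi :: "complex ^ 'm \<Rightarrow> real"
  assumes U: "open U" and p: "smooth_on U p" "strictly_psh_on U p"
    and chi: "smooth_on UNIV chi" "\<And>z. norm z \<le> \<rho> / 2 \<Longrightarrow> chi z = 1" "\<And>z. \<rho> \<le> norm z \<Longrightarrow> chi z = 0"
    and \<rho>: "0 < \<rho>" "cball 0 \<rho> \<subseteq> U"
  shows "\<forall>\<^sub>F s in at_right 0. strictly_psh_on (U - {0}) (log_pole p chi s)"
proof -
  obtain c where c: "c > 0" "\<And>x v. x \<in> cball 0 \<rho> \<Longrightarrow> c * (norm v)\<^sup>2 \<le> levi_form p x v"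
    using levi_form_uniformly_pos_on_compact[OF U p(1) compact_cball \<rho>(2)] p(2) \<rho>(2)
    unfolding strictly_psh_on_iff_levi_form by blast
  obtain K2 where K2: "\<And>x v. x \<in> cball 0 \<rho> \<Longrightarrow> - K2 * (norm v)\<^sup>2 \<le> levi_form chi x v"
    using levi_form_bounded_below_on_compact[OF open_UNIV chi(1) compact_cball] by blast
  obtain K1 where K1: "\<And>x v. x \<in> cball 0 \<rho> - {0} \<Longrightarrow>
      - K1 * (norm v)\<^sup>2 \<le> levi_form (\<lambda>z. chi z * log_norm_sq z) x v"
    using levi_form_cutoff_log_bounded_below[OF chi(1,2) \<rho>(1)] by blast
  \<comment> \<open>the negative contributions of the cut-off are \<open>O(s ln s)\<close>\<close>
  have "((\<lambda>s. 2 * exp 2 * s * (K1 + K2 * (- ln (s\<^sup>2)))) \<longlongrightarrow> 0) (at_right 0)"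
    by real_asymp
  then have "\<forall>\<^sub>F s in at_right 0. 2 * exp 2 * s * (K1 + K2 * (- ln (s\<^sup>2))) < c"
    using c(1) order_tendstoD(2) by blast
  moreover have "\<forall>\<^sub>F s in at_right (0::real). 0 < s \<and> s < 1"
    by (intro eventually_conj eventually_at_right_less eventually_at_right_field[THEN iffD2])
       (auto intro!: exI[of _ 1])
  ultimately show ?thesis
  proof eventually_elim
    case (elim s)
    define A where "A = 2 * exp 2 * s"
    have s: "0 < s" using elim by simp
    have A: "A > 0" "0 \<le> - A * ln (s\<^sup>2)"
      using elim by (simp_all add: A_def mult_nonneg_nonpos power_le_one)
    show "strictly_psh_on (U - {0}) (log_pole p chi s)"
      unfolding strictly_psh_on_iff_levi_form
    proof (intro ballI allI impI)
      fix x v :: "complex ^ 'm" assume x: "x \<in> U - {0}" and v: "v \<noteq> 0"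
      show "levi_form (log_pole p chi s) x v > 0"
      proof (cases "norm x \<le> \<rho>")
        case True
        then have "c * (norm v)\<^sup>2 \<le> levi_form p x v"
          "A * (- K1 * (norm v)\<^sup>2) \<le> A * levi_form (\<lambda>z. chi z * log_norm_sq z) x v"
          "(- A * ln (s\<^sup>2)) * (- K2 * (norm v)\<^sup>2) \<le> (- A * ln (s\<^sup>2)) * levi_form chi x v"
          using c(2)[of x v] mult_left_mono[OF K1[of x v], of A] mult_left_mono[OF K2[of x v], of "- A * ln (s\<^sup>2)"] x A
          by auto
        then have "(c - A * (K1 + K2 * (- ln (s\<^sup>2)))) * (norm v)\<^sup>2 \<le> levi_form (log_pole p chi s) x v"
          unfolding levi_form_log_pole[OF U p(1) chi(1) s x] A_def by (simp add: algebra_simps)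
        moreover have "0 < (c - A * (K1 + K2 * (- ln (s\<^sup>2)))) * (norm v)\<^sup>2"
          using elim v by (simp add: A_def)
        ultimately show ?thesis by linarith
      next
        case False
        have "levi_form (log_pole p chi s) x v = levi_form p x v"
          by (rule levi_form_eq_on_open[of "U - cball 0 \<rho>"]) (use U x False chi(3) in \<open>auto simp: log_pole_def\<close>)
        then show ?thesis using p(2) x v by (simp add: strictly_psh_on_iff_levi_form)
      qed
    qed
  qed
qed

lemma eventually_log_pole_bounds:
  fixes p chi :: "complex ^ 'm \<Rightarrow> real"
  assumes p0: "p 0 = 0" and dp0: "(p has_derivative (\<lambda>v. 0)) (at 0)"
    and chi: "\<And>z. norm z \<le> \<rho> / 2 \<Longrightarrow> chi z = 1" and \<rho>: "0 < \<rho>"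
  shows "\<forall>\<^sub>F s in at_right 0.
    (\<forall>z. exp 1 * s < norm z \<and> norm z \<le> exp 2 * s \<longrightarrow> 3 * exp 2 * s \<le> log_pole p chi s z) \<and>
    (\<forall>z. 0 < norm z \<and> norm z < s / exp 1 \<longrightarrow> log_pole p chi s z \<le> - 2 * exp 2 * s)"
proof -
  obtain \<eta> where \<eta>: "\<eta> > 0" "\<And>z. norm z \<le> \<eta> \<Longrightarrow> \<bar>p z\<bar> \<le> norm z"
    using abs_le_norm_near_0[OF dp0 p0] by blast
  have "\<forall>\<^sub>F s in at_right (0::real). 0 < s \<and> exp 2 * s \<le> min \<eta> (\<rho> / 2)"
  proof -
    have "\<forall>\<^sub>F s in at_right (0::real). s < min \<eta> (\<rho> / 2) / exp 2"
      using \<eta>(1) \<rho> by (intro eventually_at_right_field[THEN iffD2] exI[of _ "min \<eta> (\<rho> / 2) / exp 2"]) auto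
    then show ?thesis
      using eventually_at_right_less[of 0]
      by eventually_elim (auto simp: field_simps less_imp_le)
  qed
  then show ?thesis
  proof eventually_elim
    case (elim s)
    have near: "log_pole p chi s z = p z + 2 * exp 2 * s * (2 * ln (norm z) - 2 * ln s)"
      "\<bar>p z\<bar> \<le> norm z" if "0 < norm z" "norm z \<le> exp 2 * s" for z
      using that elim chi[of z] \<eta>(2)[of z]
      by (simp_all add: log_pole_def dot_square_norm ln_div ln_realpow)
    have pos: "0 < 2 * exp 2 * s" using elim by simp
    show ?case
    proof (intro conjI allI impI)
      fix z :: "complex ^ 'm" assume z: "exp 1 * s < norm z \<and> norm z \<le> exp 2 * s"
      have "0 < exp 1 * s" using elim by simp
      then have z0: "0 < norm z" using z by linarith
      then have "1 + ln s < ln (norm z)"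
        using elim z ln_less_cancel_iff[of "exp 1 * s" "norm z"] by (simp add: ln_mult)
      then have "2 * exp 2 * s * 2 \<le> 2 * exp 2 * s * (2 * ln (norm z) - 2 * ln s)"
        using pos by (intro mult_left_mono) auto
      with z0 show "3 * exp 2 * s \<le> log_pole p chi s z"
        using near[of z] z by linarith
    next
      fix z :: "complex ^ 'm" assume z: "0 < norm z \<and> norm z < s / exp 1"
      then have "ln (norm z) < ln s - 1"
        using elim ln_less_cancel_iff[of "norm z" "s / exp 1"] by (simp add: ln_div)
      then have "2 * exp 2 * s * (2 * ln (norm z) - 2 * ln s) \<le> 2 * exp 2 * s * (- 2)"
        using pos by (intro mult_left_mono) auto
      moreover have "s / exp 1 \<le> s" "s \<le> exp 2 * s"
        using elim by (simp_all add: divide_le_eq)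
      ultimately show "log_pole p chi s z \<le> - 2 * exp 2 * s"
        using near[of z] z by linarith
    qed
  qed
qed

lemma log_pole_perturbation:
  fixes p chi :: "complex ^ 'm \<Rightarrow> real"
  assumes U: "open U" and p: "smooth_on U p" "strictly_psh_on U p" "p 0 = 0" "(p has_derivative (\<lambda>v. 0)) (at 0)"
    and chi: "smooth_on UNIV chi" "\<And>z. norm z \<le> \<rho> / 2 \<Longrightarrow> chi z = 1" "\<And>z. \<rho> \<le> norm z \<Longrightarrow> chi z = 0"
    and \<rho>: "0 < \<rho>" "cball 0 \<rho> \<subseteq> U"
  obtains s where "0 < s" "exp 2 * s < \<rho>"
    "smooth_on (U - {0}) (log_pole p chi s)" "strictly_psh_on (U - {0}) (log_pole p chi s)"
    "\<And>z. exp 1 * s < norm z \<Longrightarrow> norm z \<le> exp 2 * s \<Longrightarrow> 3 * exp 2 * s \<le> log_pole p chi s z"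
    "\<And>z. 0 < norm z \<Longrightarrow> norm z < s / exp 1 \<Longrightarrow> log_pole p chi s z \<le> - 2 * exp 2 * s"
proof -
  have "\<forall>\<^sub>F s in at_right 0. strictly_psh_on (U - {0}) (log_pole p chi s)"
    by (rule eventually_strictly_psh_on_log_pole[OF U p(1,2) chi \<rho>])
  moreover have "\<forall>\<^sub>F s in at_right 0.
      (\<forall>z. exp 1 * s < norm z \<and> norm z \<le> exp 2 * s \<longrightarrow> 3 * exp 2 * s \<le> log_pole p chi s z) \<and>
      (\<forall>z. 0 < norm z \<and> norm z < s / exp 1 \<longrightarrow> log_pole p chi s z \<le> - 2 * exp 2 * s)"
    by (rule eventually_log_pole_bounds[OF p(3,4) chi(2) \<rho>(1)])
  moreover have "\<forall>\<^sub>F s in at_right (0::real). 0 < s \<and> s < \<rho> / exp 2"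
    using \<rho>(1) by (intro eventually_conj eventually_at_right_less
        eventually_at_right_field[THEN iffD2] exI[of _ "\<rho> / exp 2"]) auto
  ultimately have "\<forall>\<^sub>F s in at_right 0. strictly_psh_on (U - {0}) (log_pole p chi s) \<and>
      (\<forall>z. exp 1 * s < norm z \<and> norm z \<le> exp 2 * s \<longrightarrow> 3 * exp 2 * s \<le> log_pole p chi s z) \<and>
      (\<forall>z. 0 < norm z \<and> norm z < s / exp 1 \<longrightarrow> log_pole p chi s z \<le> - 2 * exp 2 * s) \<and>
      0 < s \<and> s < \<rho> / exp 2"
    by eventually_elim blast
  then obtain s where s_props: "strictly_psh_on (U - {0}) (log_pole p chi s) \<and>
      (\<forall>z. exp 1 * s < norm z \<and> norm z \<le> exp 2 * s \<longrightarrow> 3 * exp 2 * s \<le> log_pole p chi s z) \<and>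
      (\<forall>z. 0 < norm z \<and> norm z < s / exp 1 \<longrightarrow> log_pole p chi s z \<le> - 2 * exp 2 * s) \<and>
      0 < s \<and> s < \<rho> / exp 2"
    using eventually_happens'[OF trivial_limit_at_right_real] by blast
  then have \<phi>: "strictly_psh_on (U - {0}) (log_pole p chi s)"
    and annulus: "\<And>z. exp 1 * s < norm z \<Longrightarrow> norm z \<le> exp 2 * s \<Longrightarrow> 3 * exp 2 * s \<le> log_pole p chi s z"
    and inside: "\<And>z. 0 < norm z \<Longrightarrow> norm z < s / exp 1 \<Longrightarrow> log_pole p chi s z \<le> - 2 * exp 2 * s"
    by blast+
  from s_props have s: "0 < s" "exp 2 * s < \<rho>" by (simp_all add: field_simps)
  show thesis
    by (rule that[OF s smooth_on_log_pole[OF U p(1) chi(1) s(1)] \<phi> annulus inside])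
qed

lemma strictly_psh_interpolation:
  fixes p m :: "complex ^ 'm \<Rightarrow> real"
  assumes U: "open U" "0 \<in> U"
    and p: "smooth_on U p" "strictly_psh_on U p" "p 0 = 0" "(p has_derivative (\<lambda>v. 0)) (at 0)"
    and m: "smooth_on (U - {0}) m" "strictly_psh_on (U - {0}) m"
      "\<And>z. 0 < norm z \<Longrightarrow> norm z \<le> 1 \<Longrightarrow> 0 \<le> m z \<and> m z \<le> 1"
  shows "\<exists>\<epsilon>>0. \<exists>q. smooth_on (U - {0}) q \<and> strictly_psh_on (U - {0}) q \<and>
    (\<exists>K N. compact K \<and> K \<subseteq> U \<and> 0 \<in> interior K \<and> (\<forall>z\<in>U - K. q z = p z) \<and>
      open N \<and> 0 \<in> N \<and> N \<subseteq> K \<and> (\<forall>z\<in>N - {0}. q z = \<epsilon> * m z))"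
proof -
  obtain e0 where e0: "e0 > 0" "ball 0 e0 \<subseteq> U" using U open_contains_ball by blast
  define \<rho> where "\<rho> = min (e0 / 2) 1"
  have \<rho>: "0 < \<rho>" "\<rho> \<le> 1" "cball 0 \<rho> \<subseteq> U" using e0 by (auto simp: \<rho>_def)
  obtain chi :: "complex ^ 'm \<Rightarrow> real" where chi: "smooth_on UNIV chi"
    "\<And>z. norm z \<le> \<rho> / 2 \<Longrightarrow> chi z = 1" "\<And>z. \<rho> \<le> norm z \<Longrightarrow> chi z = 0"
    using smooth_cutoff[OF \<rho>(1)] by blast
  obtain s where s: "0 < s" "exp 2 * s < \<rho>"
    and \<phi>: "smooth_on (U - {0}) (log_pole p chi s)" "strictly_psh_on (U - {0}) (log_pole p chi s)"
    and annulus: "\<And>z. exp 1 * s < norm z \<Longrightarrow> norm z \<le> exp 2 * s \<Longrightarrow> 3 * exp 2 * s \<le> log_pole p chi s z"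
    and inside: "\<And>z. 0 < norm z \<Longrightarrow> norm z < s / exp 1 \<Longrightarrow> log_pole p chi s z \<le> - 2 * exp 2 * s"
    using log_pole_perturbation[OF U(1) p chi \<rho>(1,3)] by blast
  have "s / exp 1 < s" "s < exp 1 * s"
    using mult_strict_left_mono[of 1 "exp 1" s] s(1) by (simp_all add: divide_less_eq mult.commute)
  then have radii: "s / exp 1 \<le> exp 1 * s" "exp 1 * s < exp 2 * s"
    using s(1) by (linarith, simp)
  define A where "A = 2 * exp 2 * s"
  have A: "A > 0" using s by (simp add: A_def)
  have W: "open (U - {0})" "0 \<notin> U - {0}" "ball 0 (exp 2 * s) - {0} \<subseteq> U - {0}"
    using U(1) s(2) \<rho>(3) by auto
  have R_bounds: "0 \<le> A / 4 * m z" "A / 4 * m z \<le> exp 2 * s / 2"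
    if "0 < norm z" "norm z \<le> exp 2 * s" for z
  proof -
    have "norm z \<le> 1" using that s(2) \<rho>(2) by auto
    then have "0 \<le> m z" "m z \<le> 1" using m(3)[OF that(1)] by auto
    then show "0 \<le> A / 4 * m z" "A / 4 * m z \<le> exp 2 * s / 2"
      using A mult_left_mono[of "m z" 1 "A / 4"] by (simp_all add: A_def mult.commute)
  qed
  obtain q where q: "smooth_on (U - {0}) q" "strictly_psh_on (U - {0}) q"
    and q_outside: "\<And>z. exp 2 * s \<le> norm z \<Longrightarrow> q z = log_pole p chi s z"
    and q_inside: "\<And>z. 0 < norm z \<Longrightarrow> norm z < s / exp 1 \<Longrightarrow> q z = A / 4 * m z"
  proof (rule glue_smooth_max[OF W radii A \<phi> smooth_on_cmult[OF W(1) m(1)]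
        strictly_psh_on_cmult[OF W(1) m(1,2)]])
    show "A \<le> log_pole p chi s z - A / 4 * m z"
      if "exp 1 * s < norm z" "norm z < exp 2 * s" for z
    proof -
      have "0 < exp 1 * s" using s(1) by simp
      then have "0 < norm z" using that by linarith
      then have "A / 4 * m z \<le> exp 2 * s / 2" using R_bounds(2)[of z] that by simp
      moreover have "3 * (exp 2 * s) \<le> log_pole p chi s z" using annulus[of z] that by (simp add: mult.assoc)
      moreover have "0 < exp 2 * s" using s(1) by simp
      ultimately show ?thesis unfolding A_def mult.assoc by linarith
    qed
    show "log_pole p chi s z - A / 4 * m z \<le> - A"
      if "0 < norm z" "norm z < s / exp 1" for z
      using inside[of z] R_bounds[of z] that radii by (simp add: A_def)
  qed (use A in auto)
  have "\<forall>z\<in>U - cball 0 \<rho>. q z = p z"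
    using s(2) chi(3) q_outside by (auto simp: log_pole_def)
  moreover have "ball 0 (s / exp 1) \<subseteq> cball (0::complex ^ 'm) \<rho>"
    using radii s(2) by auto
  ultimately show ?thesis
    using q q_inside \<rho> A s(1) by (intro exI[of _ "A / 4"] conjI exI[of _ q] exI[of _ "cball 0 \<rho>"]
        exI[of _ "ball 0 (s / exp 1)"]) auto
qed

theorem lemma4p5:
  fixes lam :: "'m::finite \<Rightarrow> real"
    and U :: "(complex ^ 'm) set"
    and p :: "complex ^ 'm \<Rightarrow> real"
  assumes lam: "\<And>a. 0 < lam a \<and> lam a < 1"
    and U: "open U" "0 \<in> U"
    and p_smooth: "smooth_on U p"
    and p_psh: "strictly_psh_on U p"
    and p0: "p 0 = 0"
    and dp0: "(p has_derivative (\<lambda>v. 0)) (at 0)"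
  shows "\<exists>\<epsilon>>0. \<exists>q :: complex ^ 'm \<Rightarrow> real.
           smooth_on (U - {0}) q \<and> strictly_psh_on (U - {0}) q \<and>
           (\<exists>K N. compact K \<and> K \<subseteq> U \<and> 0 \<in> interior K \<and>
                  (\<forall>z\<in>U - K. q z = p z) \<and>
                  open N \<and> 0 \<in> N \<and> N \<subseteq> K \<and>
                  (\<forall>z\<in>N - {0}. q z = \<epsilon> * (r_lambda lam z)\<^sup>2))"
proof -
  have lam_pos: "\<And>a. lam a > 0" using lam by blast
  have "smooth_on (U - {0}) (\<lambda>z. (r_lambda lam z)\<^sup>2)"
    by (rule smooth_on_subset[OF smooth_on_r_lambda_sq[of lam, OF lam_pos]]) auto
  moreover have "strictly_psh_on (U - {0}) (\<lambda>z. (r_lambda lam z)\<^sup>2)"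
    by (rule strictly_psh_on_subset[OF strictly_psh_on_r_lambda_sq[of lam, OF lam_pos]]) auto
  moreover have "0 \<le> (r_lambda lam z)\<^sup>2 \<and> (r_lambda lam z)\<^sup>2 \<le> 1" if "0 < norm z" "norm z \<le> 1" for z
    using r_lambda_sq_le_1[of lam, OF lam_pos, of z] that by simp
  ultimately show ?thesis by (rule strictly_psh_interpolation[OF U p_smooth p_psh p0 dp0])
qed
end
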